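(* Let $\varPhi:\mathbb{R}^k\times\mathbb{R}^l\to\mathbb{R}^p$ be continuously differentiable, $\Omega\subset\mathbb{R}^k$ closed, $T:\mathbb{R}^l\rightrightarrows\mathbb{R}^q$ outer semicontinuous, and let $(\bar x,\bar\sigma)$ satisfy $\varPhi(\bar x,\bar\sigma)=0$, $\bar x\in\Omega$, $0\in T(\bar\sigma)$. Define $G:\mathbb{R}^k\times\mathbb{R}^l\to\mathbb{R}^{k+p+q}$, $G(x,\sigma):=(-x,\varPhi(x,\sigma),0)$, and $\mathcal{P}:\mathbb{R}^k\times\mathbb{R}^l\rightrightarrows\mathbb{R}^{k+p+q}$, $\mathcal{P}(x,\sigma):=\Omega\times\{0\}\times T(\sigma)$. The following are equivalent: (a) $G+\mathcal{P}$ is metrically regular around $((\bar x,\bar\sigma),(0,0,0))$; (b) for $z\in\mathbb{R}^p$, $\nu\in\mathbb{R}^q$: $\big[0\in\nabla_x\varPhi(\bar x,\bar\sigma)z+N_\Omega(\bar x)$ and $0\in\nabla_\sigma\varPhi(\bar x,\bar\sigma)z+D^*T(\bar\sigma|0)(\nu)\big]\Longrightarrow z=0,\ \nu=0$; (c) $T$ is metrically regular around $(\bar\sigma,0)$, and for $z\in\mathbb{R}^p$: $\big[0\in\nabla_x\varPhi(\bar x,\bar\sigma)z+N_\Omega(\bar x)$ and $0\in\nabla_\sigma\varPhi(\bar x,\bar\sigma)z+\mathrm{rge}\,D^*T(\bar\sigma|0)\big]\Longrightarrow z=0$.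
   Context: $\nabla_x\varPhi(x,\sigma)$ ($k\times p$) and $\nabla_\sigma\varPhi(x,\sigma)$ ($l\times p$) are the transposed partial Jacobians. Outer semicontinuity means closed graph. Tangent cone $T_Z(x):=\limsup_{\tau\searrow0}(Z-x)/\tau$; limiting normal cone $N_Z(\bar x):=\limsup_{x\to\bar x,x\in Z}T_Z(x)^\circ$ ($K^\circ$ polar). Coderivative $D^*S(\bar u|\bar y)(z):=\{v\mid(v,-z)\in N_{\mathrm{gph}\,S}(\bar u,\bar y)\}$; $\mathrm{rge}\,D^*S(\bar u|\bar y):=\bigcup_zD^*S(\bar u|\bar y)(z)$. $S$ is metrically regular around $(\bar u,\bar y)\in\mathrm{gph}\,S$ if there are $c,\varepsilon>0$ with $\mathrm{dist}[u,S^{-1}(y)]\le c\,\mathrm{dist}[y,S(u)]$ for all $(u,y)\in(\bar u,\bar y)+\varepsilon\mathbb{B}$. *)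

theory Defs
  imports "HOL-Analysis.Analysis"
begin

definition gph :: "('a \<Rightarrow> 'b set) \<Rightarrow> ('a \<times> 'b) set" where
  "gph S = {(u, y). y \<in> S u}"

definition outer_semicontinuous :: "('a::topological_space \<Rightarrow> 'b::topological_space set) \<Rightarrow> bool" where
  "outer_semicontinuous S \<longleftrightarrow> closed (gph S)"

text \<open>Tangent cone T_Z(x) = limsup_{tau \<searrow> 0} (Z - x)/tau (Painleve-Kuratowski outer limit).\<close>
definition tangent_cone :: "'a::real_normed_vector set \<Rightarrow> 'a \<Rightarrow> 'a set" where
  "tangent_cone Z x = {w. \<exists>\<tau> :: nat \<Rightarrow> real. \<exists>ws :: nat \<Rightarrow> 'a.
      (\<forall>n. \<tau> n > 0) \<and> \<tau> \<longlonglongrightarrow> 0 \<and> ws \<longlonglongrightarrow> w \<and> (\<forall>n. x + \<tau> n *\<^sub>R ws n \<in> Z)}"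

definition polar :: "'a::real_inner set \<Rightarrow> 'a set" where
  "polar K = {v. \<forall>w\<in>K. v \<bullet> w \<le> 0}"

text \<open>Limiting normal cone N_Z(xbar) = limsup_{x \<rightarrow> xbar, x \<in> Z} T_Z(x)\<degree>.\<close>
definition normal_cone :: "'a::real_inner set \<Rightarrow> 'a \<Rightarrow> 'a set" where
  "normal_cone Z xb = {v. \<exists>xs :: nat \<Rightarrow> 'a. \<exists>vs :: nat \<Rightarrow> 'a.
      (\<forall>n. xs n \<in> Z) \<and> xs \<longlonglongrightarrow> xb \<and> vs \<longlonglongrightarrow> v \<and> (\<forall>n. vs n \<in> polar (tangent_cone Z (xs n)))}"

definition coderiv :: "('a::real_inner \<Rightarrow> 'b::real_inner set) \<Rightarrow> 'a \<Rightarrow> 'b \<Rightarrow> 'b \<Rightarrow> 'a set" where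
  "coderiv S u y z = {v. (v, - z) \<in> normal_cone (gph S) (u, y)}"

definition coderiv_range :: "('a::real_inner \<Rightarrow> 'b::real_inner set) \<Rightarrow> 'a \<Rightarrow> 'b \<Rightarrow> 'a set" where
  "coderiv_range S u y = (\<Union>z. coderiv S u y z)"

text \<open>Distance to the empty set is +\<infinity> (the library's
  infdist gives 0 there), so: if S u is empty the right-hand side is +\<infinity> and nothing is
  required; otherwise S^{-1}(y) must be nonempty and the usual inequality must hold.\<close>
definition metric_regular :: "('a::metric_space \<Rightarrow> 'b::metric_space set) \<Rightarrow> 'a \<Rightarrow> 'b \<Rightarrow> bool" where
  "metric_regular S ub yb \<longleftrightarrow> (\<exists>c>0. \<exists>\<epsilon>>0. \<forall>u y. (u, y) \<in> cball (ub, yb) \<epsilon> \<longrightarrow> S u \<noteq> {} \<longrightarrow>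
      {x. y \<in> S x} \<noteq> {} \<and> infdist u {x. y \<in> S x} \<le> c * infdist y (S u))"

definition C1_map :: "('a::real_normed_vector \<Rightarrow> 'b::real_normed_vector) \<Rightarrow> bool" where
  "C1_map f \<longleftrightarrow> (\<exists>D :: 'a \<Rightarrow> ('a \<Rightarrow>\<^sub>L 'b). (\<forall>w. (f has_derivative blinfun_apply (D w)) (at w))
                       \<and> continuous_on UNIV D)"

definition grad_x :: "('a::real_inner \<times> 'b::real_inner \<Rightarrow> 'c::real_inner) \<Rightarrow> 'a \<Rightarrow> 'b \<Rightarrow> 'c \<Rightarrow> 'a" where
  "grad_x \<Phi> x s = adjoint (\<lambda>h. frechet_derivative \<Phi> (at (x, s)) (h, 0))"

definition grad_s :: "('a::real_inner \<times> 'b::real_inner \<Rightarrow> 'c::real_inner) \<Rightarrow> 'a \<Rightarrow> 'b \<Rightarrow> 'c \<Rightarrow> 'b" where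
  "grad_s \<Phi> x s = adjoint (\<lambda>h. frechet_derivative \<Phi> (at (x, s)) (0, h))"

end

theory Submission
  imports Defs
begin

text \<open>
  The core is the finite-dimensional Mordukhovich criterion: a map S with closed graph is
  metrically regular at (ub, yb) iff (0, b) in the limiting normal cone of gph S at (ub, yb)
  forces b = 0. Both directions pass through a uniform bound |b| <= c |a| for regular normals
  (a, b) to gph S near the point. Metric regularity gives the bound by lifting every direction
  (0, b) to a tangent (l, b) with |l| <= c |b|, and the bound passes to limiting normals. Conversely,
  a violation of the bound along a sequence converges, after normalisation, to a nonzero limiting
  normal (0, b); and the bound gives metric regularity because at a minimiser over gph S of a
  smoothed distance to the target that misses the target, the Fermat rule produces a regular
  normal violating it.

  For G + P the graph is the set of ((x, s), (w1, w2, w3)) with x + w1 in Omega, w2 = Phi (x, s)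
  and w3 in T s. Its regular normal cone is computed exactly from those of Omega and gph T and the
  partial gradients of Phi, and continuity of the derivative of Phi carries the formula over to
  limiting normals. Hence the kernel condition for G + P is (b), which in turn splits into the
  kernel condition for T, i.e. metric regularity of T by the criterion, and the range condition
  of (c).
\<close>

lemma mem_gph_iff [simp]: "(u, y) \<in> gph S \<longleftrightarrow> y \<in> S u"
  by (simp add: gph_def)

lemma closed_gph_imp_closed_image:
  fixes S :: "'a::real_normed_vector \<Rightarrow> 'b::real_normed_vector set"
  assumes "closed (gph S)"
  shows "closed (S u)"
proof -
  have "S u = Pair u -` gph S" by auto
  then show ?thesis
    using closed_vimage[OF assms, of "Pair u"] by (simp add: continuous_on_Pair)
qed

lemma closed_gph_imp_closed_preimage:
  fixes S :: "'a::real_normed_vector \<Rightarrow> 'b::real_normed_vector set"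
  assumes "closed (gph S)"
  shows "closed {x. y \<in> S x}"
proof -
  have "{x. y \<in> S x} = (\<lambda>x. (x, y)) -` gph S" by auto
  then show ?thesis
    using closed_vimage[OF assms, of "\<lambda>x. (x, y)"] by (simp add: continuous_on_Pair)
qed

lemma polar_scaleR: "v \<in> polar K \<Longrightarrow> 0 \<le> c \<Longrightarrow> c *\<^sub>R v \<in> polar K"
  by (auto simp: polar_def mult_nonneg_nonpos)

lemma zero_in_tangent_cone: "x \<in> Z \<Longrightarrow> 0 \<in> tangent_cone Z x"
  unfolding tangent_cone_def
  by (intro CollectI exI[of _ "\<lambda>n. inverse (real (Suc n))"] exI[of _ "\<lambda>n. 0"])
     (use LIMSEQ_inverse_real_of_nat in auto)

lemma zero_in_normal_cone: "x \<in> Z \<Longrightarrow> 0 \<in> normal_cone Z x"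
  unfolding normal_cone_def polar_def
  by (intro CollectI exI[of _ "\<lambda>n. x"] exI[of _ "\<lambda>n. 0"]) auto

lemma tangent_cone_linear_image:
  assumes "bounded_linear L" and "\<And>z. z \<in> Z \<Longrightarrow> c + L z \<in> Z'" and "t \<in> tangent_cone Z z"
  shows "L t \<in> tangent_cone Z' (c + L z)"
proof -
  obtain \<tau> ws where "\<forall>n. \<tau> n > 0" "\<tau> \<longlonglongrightarrow> 0" "ws \<longlonglongrightarrow> t" "\<forall>n. z + \<tau> n *\<^sub>R ws n \<in> Z"
    using assms(3) unfolding tangent_cone_def by blast
  moreover have "(\<lambda>n. L (ws n)) \<longlonglongrightarrow> L t"
    using assms(1) \<open>ws \<longlonglongrightarrow> t\<close> by (rule bounded_linear.tendsto)
  moreover have "c + L z + \<tau> n *\<^sub>R L (ws n) \<in> Z'" for n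
    using assms(2)[of "z + \<tau> n *\<^sub>R ws n"] \<open>\<forall>n. z + \<tau> n *\<^sub>R ws n \<in> Z\<close> assms(1)
    by (simp add: linear_simps add.assoc)
  ultimately show ?thesis
    unfolding tangent_cone_def by (intro CollectI exI[of _ \<tau>] exI[of _ "\<lambda>n. L (ws n)"]) auto
qed

lemma tangent_cone_subseq_limit:
  assumes "\<And>n. \<tau> n > 0" "\<tau> \<longlonglongrightarrow> 0" "compact K" "\<And>n. h n \<in> K" "\<And>n. x + \<tau> n *\<^sub>R h n \<in> Z"
  shows "\<exists>l\<in>K. l \<in> tangent_cone Z x"
proof -
  obtain l r where "l \<in> K" "strict_mono r" "(h \<circ> r) \<longlonglongrightarrow> l"
    using seq_compactE[OF compact_imp_seq_compact[OF assms(3)]] assms(4) by metis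
  moreover have "(\<tau> \<circ> r) \<longlonglongrightarrow> 0"
    using LIMSEQ_subseq_LIMSEQ[OF assms(2) \<open>strict_mono r\<close>] .
  ultimately show ?thesis
    unfolding tangent_cone_def using assms(1,5)
    by (intro bexI[of _ l] CollectI exI[of _ "\<tau> \<circ> r"] exI[of _ "h \<circ> r"]) auto
qed

lemma tendsto_difference_quotient:
  assumes f: "(f has_derivative f') (at p)"
    and \<tau>: "\<And>n. \<tau> n > 0" "\<tau> \<longlonglongrightarrow> 0" and h: "h \<longlonglongrightarrow> k"
  shows "(\<lambda>n. (f (p + \<tau> n *\<^sub>R h n) - f p) /\<^sub>R \<tau> n) \<longlonglongrightarrow> f' k"
proof -
  have lin: "bounded_linear f'"
    using f by (rule has_derivative_bounded_linear)
  define r where "r y = f y - f p - f' (y - p)" for y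
  define q where "q = (\<lambda>y. norm (r y) / norm (y - p))"
  have "((\<lambda>y. (1 / norm (y - p)) *\<^sub>R r y) \<longlongrightarrow> 0) (at p)"
    using f unfolding has_derivative_within r_def diff_diff_eq by simp
  then have "((\<lambda>y. norm ((1 / norm (y - p)) *\<^sub>R r y)) \<longlongrightarrow> 0) (at p)"
    by (rule tendsto_norm_zero)
  then have "(q \<longlongrightarrow> q p) (at p)"
    by (simp add: q_def)
  then have q: "(q \<longlongrightarrow> 0) (nhds p)"
    unfolding tendsto_at_iff_tendsto_nhds by (simp add: q_def)
  have "(\<lambda>n. p + \<tau> n *\<^sub>R h n) \<longlonglongrightarrow> p + 0 *\<^sub>R k"
    by (intro tendsto_intros \<tau> h)
  then have "(\<lambda>n. q (p + \<tau> n *\<^sub>R h n)) \<longlonglongrightarrow> 0"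
    using filterlim_compose[OF q] by simp
  then have "(\<lambda>n. q (p + \<tau> n *\<^sub>R h n) * norm (h n)) \<longlonglongrightarrow> 0 * norm k"
    by (intro tendsto_intros h)
  moreover have "norm (r (p + \<tau> n *\<^sub>R h n) /\<^sub>R \<tau> n) = q (p + \<tau> n *\<^sub>R h n) * norm (h n)" for n
  proof (cases "h n = 0")
    case True
    then show ?thesis
      using bounded_linear.linear[OF lin] by (simp add: q_def r_def linear_0)
  next
    case False
    then show ?thesis
      using \<tau>(1)[of n] by (simp add: q_def divide_inverse mult.commute)
  qed
  ultimately have "(\<lambda>n. norm (r (p + \<tau> n *\<^sub>R h n) /\<^sub>R \<tau> n)) \<longlonglongrightarrow> 0"
    by simp
  then have "(\<lambda>n. r (p + \<tau> n *\<^sub>R h n) /\<^sub>R \<tau> n) \<longlonglongrightarrow> 0"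
    by (rule tendsto_norm_zero_cancel)
  moreover have "(\<lambda>n. f' (h n)) \<longlonglongrightarrow> f' k"
    using lin h by (rule bounded_linear.tendsto)
  ultimately have "(\<lambda>n. r (p + \<tau> n *\<^sub>R h n) /\<^sub>R \<tau> n + f' (h n)) \<longlonglongrightarrow> 0 + f' k"
    by (rule tendsto_add)
  moreover have "r (p + \<tau> n *\<^sub>R h n) /\<^sub>R \<tau> n + f' (h n) = (f (p + \<tau> n *\<^sub>R h n) - f p) /\<^sub>R \<tau> n" for n
  proof -
    have "r (p + \<tau> n *\<^sub>R h n) = (f (p + \<tau> n *\<^sub>R h n) - f p) - \<tau> n *\<^sub>R f' (h n)"
      by (simp add: r_def linear_scale[OF bounded_linear.linear[OF lin]])
    then show ?thesis
      using \<tau>(1)[of n] by (simp add: scaleR_diff_right)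
  qed
  ultimately show ?thesis
    by simp
qed

lemma polar_tangent_cone_at_minimizer:
  assumes F: "(F has_derivative (\<lambda>h. g \<bullet> h)) (at w)" and min: "\<And>w'. w' \<in> C \<Longrightarrow> F w \<le> F w'"
  shows "- g \<in> polar (tangent_cone C w)"
  unfolding polar_def
proof (intro CollectI ballI)
  fix t assume "t \<in> tangent_cone C w"
  then obtain \<tau> ws where \<tau>: "\<forall>n. \<tau> n > 0" "\<tau> \<longlonglongrightarrow> 0" "ws \<longlonglongrightarrow> t" "\<forall>n. w + \<tau> n *\<^sub>R ws n \<in> C"
    unfolding tangent_cone_def by blast
  have "(\<lambda>n. (F (w + \<tau> n *\<^sub>R ws n) - F w) /\<^sub>R \<tau> n) \<longlonglongrightarrow> g \<bullet> t"
    using tendsto_difference_quotient[OF F] \<tau>(1-3) by blast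
  moreover have "0 \<le> (F (w + \<tau> n *\<^sub>R ws n) - F w) /\<^sub>R \<tau> n" for n
    using min[OF \<tau>(4)[rule_format, of n]] \<tau>(1)[rule_format, of n] by simp
  ultimately have "0 \<le> g \<bullet> t"
    by (simp add: LIMSEQ_le_const)
  then show "- g \<bullet> t \<le> 0"
    by simp
qed

lemma closed_attains_inf_bounded_sublevel:
  fixes F :: "'a::heine_borel \<Rightarrow> real"
  assumes "closed C" "continuous_on UNIV F" "w0 \<in> C" "bounded {w \<in> C. F w \<le> F w0}"
  shows "\<exists>w\<in>C. \<forall>w'\<in>C. F w \<le> F w'"
proof -
  define K where "K = {w \<in> C. F w \<le> F w0}"
  have "K = C \<inter> {w. F w \<le> F w0}"
    by (auto simp: K_def)
  then have "closed K"
    using assms(1,2) by (simp add: closed_Int closed_Collect_le continuous_on_const)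
  then have "compact K"
    using assms(4) by (simp add: compact_eq_bounded_closed K_def)
  moreover have "K \<noteq> {}"
    using assms(3) by (auto simp: K_def)
  ultimately have "\<exists>w\<in>K. \<forall>w'\<in>K. F w \<le> F w'"
    using continuous_attains_inf continuous_on_subset[OF assms(2) subset_UNIV] by metis
  then obtain w where w: "w \<in> K" "\<forall>w'\<in>K. F w \<le> F w'" ..
  have "F w \<le> F w'" if "w' \<in> C" for w'
  proof (cases "F w' \<le> F w0")
    case True
    then show ?thesis using w(2) that by (auto simp: K_def)
  next
    case False
    then show ?thesis using w(1) by (auto simp: K_def)
  qed
  with w(1) show ?thesis
    by (auto simp: K_def)
qed

lemma infdist_le_of_approx:
  assumes "0 < \<eta>0" and approx: "\<And>\<eta>. 0 < \<eta> \<Longrightarrow> \<eta> \<le> \<eta>0 \<Longrightarrow> \<exists>x\<in>A. dist x u \<le> K + \<eta>"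
  shows "A \<noteq> {} \<and> infdist u A \<le> K"
proof
  show "A \<noteq> {}"
    using approx[OF assms(1) order_refl] by blast
  show "infdist u A \<le> K"
  proof (rule field_le_epsilon)
    fix e :: real assume "0 < e"
    then obtain x where "x \<in> A" "dist x u \<le> K + min e \<eta>0"
      using approx[of "min e \<eta>0"] assms(1) by auto
    then show "infdist u A \<le> K + e"
      using infdist_le[of x A u] by (simp add: dist_commute)
  qed
qed

text \<open>The polar of the tangent cone is the regular normal cone, so this is the estimate
  |b| <= c |a| for every a in the regular coderivative of S at points (u, v) near (ub, yb),
  evaluated at - b.\<close>

definition regular_coderiv_bound ::
    "('a::real_inner \<Rightarrow> 'b::real_inner set) \<Rightarrow> 'a \<Rightarrow> 'b \<Rightarrow> real \<Rightarrow> real \<Rightarrow> bool" where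
  "regular_coderiv_bound S ub yb c \<delta> \<longleftrightarrow>
     (\<forall>u v a b. v \<in> S u \<longrightarrow> dist (u, v) (ub, yb) \<le> \<delta> \<longrightarrow>
        (a, b) \<in> polar (tangent_cone (gph S) (u, v)) \<longrightarrow> norm b \<le> c * norm a)"

lemma metric_regular_perturbed_preimage:
  fixes S :: "'a::euclidean_space \<Rightarrow> 'b::euclidean_space set"
  assumes "closed (gph S)" and "0 \<le> c"
    and mr: "\<And>u y. (u, y) \<in> cball (ub, yb) \<epsilon> \<Longrightarrow> S u \<noteq> {} \<Longrightarrow>
               {x. y \<in> S x} \<noteq> {} \<and> infdist u {x. y \<in> S x} \<le> c * infdist y (S u)"
    and v: "v \<in> S u" and near: "dist (u, v) (ub, yb) + norm d \<le> \<epsilon>"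
  shows "\<exists>x. v + d \<in> S x \<and> dist x u \<le> c * norm d"
proof -
  have "dist (ub, yb) (u, v + d) \<le> dist (ub, yb) (u, v) + dist (u, v) (u, v + d)"
    by (rule dist_triangle)
  also have "dist (u, v) (u, v + d) = norm d"
    by (simp add: dist_Pair_Pair dist_norm)
  finally have "(u, v + d) \<in> cball (ub, yb) \<epsilon>"
    using near by (simp add: dist_commute)
  then have "{x. v + d \<in> S x} \<noteq> {}" and inf: "infdist u {x. v + d \<in> S x} \<le> c * infdist (v + d) (S u)"
    using mr v by auto
  then obtain x where x: "v + d \<in> S x" "infdist u {x. v + d \<in> S x} = dist u x"
    using infdist_attains_inf[OF closed_gph_imp_closed_preimage[OF assms(1)]] by blast
  have "infdist (v + d) (S u) \<le> norm d"
    using infdist_le[OF v, of "v + d"] by (simp add: dist_norm)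
  then have "c * infdist (v + d) (S u) \<le> c * norm d"
    using \<open>0 \<le> c\<close> by (simp add: mult_left_mono)
  with inf x show ?thesis
    by (metis dist_commute order_trans)
qed

lemma metric_regular_imp_tangent_lift:
  fixes S :: "'a::euclidean_space \<Rightarrow> 'b::euclidean_space set"
  assumes "closed (gph S)" and "c > 0" "\<epsilon> > 0"
    and mr: "\<And>u y. (u, y) \<in> cball (ub, yb) \<epsilon> \<Longrightarrow> S u \<noteq> {} \<Longrightarrow>
               {x. y \<in> S x} \<noteq> {} \<and> infdist u {x. y \<in> S x} \<le> c * infdist y (S u)"
    and v: "v \<in> S u" and near: "dist (u, v) (ub, yb) \<le> \<epsilon> / 2"
  shows "\<exists>l. norm l \<le> c * norm b \<and> (l, b) \<in> tangent_cone (gph S) (u, v)"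
proof -
  define s where "s = \<epsilon> / (2 * (norm b + 1))"
  define \<tau> where "\<tau> n = s * inverse (real (Suc n))" for n
  have "0 < norm b + 1"
    using norm_ge_zero[of b] by linarith
  then have s: "s > 0" "s * norm b \<le> \<epsilon> / 2"
    using \<open>\<epsilon> > 0\<close> by (simp_all add: s_def field_simps)
  have \<tau>: "\<tau> n > 0" "\<tau> n * norm b \<le> \<epsilon> / 2" for n
  proof -
    show "\<tau> n > 0"
      using s(1) by (simp add: \<tau>_def)
    have "\<tau> n \<le> s"
      using s(1) by (simp add: \<tau>_def mult_left_le field_simps)
    then show "\<tau> n * norm b \<le> \<epsilon> / 2"
      using s(2) mult_right_mono[OF _ norm_ge_zero] by (meson order_trans)
  qed
  have "\<tau> \<longlonglongrightarrow> 0"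
    unfolding \<tau>_def by (rule tendsto_mult_right_zero[OF LIMSEQ_inverse_real_of_nat])
  have "\<exists>x. v + \<tau> n *\<^sub>R b \<in> S x \<and> dist x u \<le> c * (\<tau> n * norm b)" for n
    using metric_regular_perturbed_preimage[OF assms(1) _ mr v, where d = "\<tau> n *\<^sub>R b"] near \<tau>[of n] \<open>c > 0\<close>
    by simp
  then obtain x where x: "\<And>n. v + \<tau> n *\<^sub>R b \<in> S (x n)" "\<And>n. dist (x n) u \<le> c * (\<tau> n * norm b)"
    by metis
  define h where "h n = ((x n - u) /\<^sub>R \<tau> n, b)" for n
  have "h n \<in> cball 0 (c * norm b) \<times> {b}" for n
  proof -
    have "norm ((x n - u) /\<^sub>R \<tau> n) = norm (x n - u) / \<tau> n"
      using \<tau>(1)[of n] by (simp add: divide_inverse_commute)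
    also have "\<dots> \<le> c * norm b"
      using x(2)[of n] \<tau>(1)[of n] by (simp add: pos_divide_le_eq dist_norm mult_ac)
    finally show ?thesis
      by (simp add: h_def)
  qed
  moreover have "(u, v) + \<tau> n *\<^sub>R h n \<in> gph S" for n
    using x(1)[of n] \<tau>(1)[of n] by (simp add: h_def)
  moreover have "compact (cball (0::'a) (c * norm b) \<times> {b})"
    by (intro compact_Times compact_cball compact_sing)
  ultimately obtain l where "l \<in> cball 0 (c * norm b) \<times> {b}" "l \<in> tangent_cone (gph S) (u, v)"
    using tangent_cone_subseq_limit[OF \<tau>(1) \<open>\<tau> \<longlonglongrightarrow> 0\<close>] by blast
  then show ?thesis
    by (cases l) auto
qed

lemma metric_regular_imp_regular_coderiv_bound:
  fixes S :: "'a::euclidean_space \<Rightarrow> 'b::euclidean_space set"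
  assumes "closed (gph S)" "metric_regular S ub yb"
  shows "\<exists>c>0. \<exists>\<delta>>0. regular_coderiv_bound S ub yb c \<delta>"
proof -
  obtain c \<epsilon> where c: "c > 0" "\<epsilon> > 0" and mr: "\<forall>u y. (u, y) \<in> cball (ub, yb) \<epsilon> \<longrightarrow> S u \<noteq> {} \<longrightarrow>
      {x. y \<in> S x} \<noteq> {} \<and> infdist u {x. y \<in> S x} \<le> c * infdist y (S u)"
    using assms(2) unfolding metric_regular_def by blast
  have "regular_coderiv_bound S ub yb c (\<epsilon> / 2)"
    unfolding regular_coderiv_bound_def
  proof (intro allI impI)
    fix u v a b
    assume uv: "v \<in> S u" "dist (u, v) (ub, yb) \<le> \<epsilon> / 2"
      and ab: "(a, b) \<in> polar (tangent_cone (gph S) (u, v))"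
    obtain l where l: "norm l \<le> c * norm b" "(l, b) \<in> tangent_cone (gph S) (u, v)"
      using metric_regular_imp_tangent_lift[OF assms(1) c] mr uv by blast
    have "norm b ^ 2 \<le> - (a \<bullet> l)"
      using ab l(2) by (auto simp: polar_def power2_norm_eq_inner)
    also have "\<dots> \<le> norm a * norm l"
      using Cauchy_Schwarz_ineq2[of a l] by linarith
    also have "\<dots> \<le> c * norm a * norm b"
      using mult_left_mono[OF l(1) norm_ge_zero[of a]] by (simp add: mult_ac)
    finally have "norm b * norm b \<le> (c * norm a) * norm b"
      by (simp add: power2_eq_square mult_ac)
    then show "norm b \<le> c * norm a"
      using c by (cases "b = 0") (auto simp: mult_le_cancel_right)
  qed
  with c show ?thesis
    using half_gt_zero by blast
qed

lemma regular_coderiv_bound_imp_coderiv_kernel: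
  assumes bound: "regular_coderiv_bound S ub yb c \<delta>" and "\<delta> > 0" and "0 \<in> coderiv S ub yb z"
  shows "z = 0"
proof -
  obtain ws vs where ws: "\<forall>n. ws n \<in> gph S" "ws \<longlonglongrightarrow> (ub, yb)"
    and vs: "vs \<longlonglongrightarrow> (0, - z)" "\<forall>n. vs n \<in> polar (tangent_cone (gph S) (ws n))"
    using assms(3) unfolding coderiv_def normal_cone_def by blast
  have "eventually (\<lambda>n. dist (ws n) (ub, yb) < \<delta>) sequentially"
    using ws(2) \<open>\<delta> > 0\<close> by (rule tendstoD)
  then have "eventually (\<lambda>n. norm (snd (vs n)) \<le> c * norm (fst (vs n))) sequentially"
  proof eventually_elim
    case (elim n)
    obtain u v a b where "ws n = (u, v)" "vs n = (a, b)"
      by fastforce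
    moreover have "v \<in> S u" "(a, b) \<in> polar (tangent_cone (gph S) (u, v))"
      using ws(1) vs(2) calculation by (metis mem_gph_iff)+
    ultimately show ?case
      using elim bound unfolding regular_coderiv_bound_def by auto
  qed
  moreover have "(\<lambda>n. norm (snd (vs n))) \<longlonglongrightarrow> norm (- z)"
    using tendsto_norm[OF tendsto_snd[OF vs(1)]] by simp
  moreover have "(\<lambda>n. c * norm (fst (vs n))) \<longlonglongrightarrow> c * norm 0"
    using tendsto_mult_left[OF tendsto_norm[OF tendsto_fst[OF vs(1)]]] by simp
  ultimately have "norm (- z) \<le> c * norm 0"
    using tendsto_le[OF trivial_limit_sequentially] by fastforce
  then show ?thesis
    by simp
qed

lemma normal_cone_degenerate_limit:
  fixes Z :: "('a::euclidean_space \<times> 'b::euclidean_space) set"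
  assumes z: "\<And>n. z n \<in> Z" "z \<longlonglongrightarrow> p"
    and ab: "\<And>n. (a n, b n) \<in> polar (tangent_cone Z (z n))" "\<And>n. real (Suc n) * norm (a n) < norm (b n)"
  shows "\<exists>l. norm l = 1 \<and> (0, l) \<in> normal_cone Z p"
proof -
  have b: "norm (b n) > 0" for n
    using ab(2)[of n] by (meson le_less_trans mult_nonneg_nonneg norm_ge_zero of_nat_0_le_iff)
  define \<beta> where "\<beta> n = b n /\<^sub>R norm (b n)" for n
  have "\<forall>n. \<beta> n \<in> sphere 0 1"
    using b by (simp add: \<beta>_def)
  then obtain l r where l: "l \<in> sphere 0 1" "strict_mono r" "(\<beta> \<circ> r) \<longlonglongrightarrow> l"
    by (rule seq_compactE[OF compact_imp_seq_compact[OF compact_sphere]])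
  have a_small: "norm (a n /\<^sub>R norm (b n)) \<le> inverse (real (Suc n))" for n
  proof -
    have "norm (a n /\<^sub>R norm (b n)) = norm (a n) / norm (b n)"
      by (simp add: divide_inverse_commute)
    also have "\<dots> \<le> inverse (real (Suc n))"
      using ab(2)[of n] b[of n] by (simp add: pos_divide_le_eq inverse_eq_divide pos_le_divide_eq mult.commute)
    finally show ?thesis .
  qed
  have "(\<lambda>n. a n /\<^sub>R norm (b n)) \<longlonglongrightarrow> 0"
    using Lim_null_comparison[OF always_eventually[OF allI[OF a_small]] LIMSEQ_inverse_real_of_nat] .
  from tendsto_Pair[OF LIMSEQ_subseq_LIMSEQ[OF this l(2)] l(3)]
  have "(\<lambda>n. (a (r n) /\<^sub>R norm (b (r n)), \<beta> (r n))) \<longlonglongrightarrow> (0, l)"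
    by (simp add: comp_def)
  moreover have "(\<lambda>n. z (r n)) \<longlonglongrightarrow> p"
    using LIMSEQ_subseq_LIMSEQ[OF z(2) l(2)] by (simp add: comp_def)
  moreover have "(a n /\<^sub>R norm (b n), \<beta> n) \<in> polar (tangent_cone Z (z n))" for n
    using polar_scaleR[OF ab(1)[of n], of "inverse (norm (b n))"] by (simp add: \<beta>_def)
  ultimately have "(0, l) \<in> normal_cone Z p"
    unfolding normal_cone_def using z(1)
    by (intro CollectI exI[of _ "\<lambda>n. z (r n)"] exI[of _ "\<lambda>n. (a (r n) /\<^sub>R norm (b (r n)), \<beta> (r n))"]) simp
  with l(1) show ?thesis
    by auto
qed

lemma coderiv_kernel_imp_regular_coderiv_bound:
  fixes S :: "'a::euclidean_space \<Rightarrow> 'b::euclidean_space set"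
  assumes kernel: "\<And>z. 0 \<in> coderiv S ub yb z \<Longrightarrow> z = 0"
  shows "\<exists>c>0. \<exists>\<delta>>0. regular_coderiv_bound S ub yb c \<delta>"
proof (rule ccontr)
  assume "\<not> ?thesis"
  then have "\<not> regular_coderiv_bound S ub yb (real (Suc n)) (inverse (real (Suc n)))" for n
    by (metis of_nat_0_less_iff positive_imp_inverse_positive zero_less_Suc)
  then have "\<forall>n. \<exists>u v a b. v \<in> S u \<and> dist (u, v) (ub, yb) \<le> inverse (real (Suc n)) \<and>
      (a, b) \<in> polar (tangent_cone (gph S) (u, v)) \<and> real (Suc n) * norm a < norm b"
    unfolding regular_coderiv_bound_def by (auto simp: not_le)
  then obtain u v a b where uv: "\<And>n. v n \<in> S (u n)" "\<And>n. dist (u n, v n) (ub, yb) \<le> inverse (real (Suc n))"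
    and ab: "\<And>n. (a n, b n) \<in> polar (tangent_cone (gph S) (u n, v n))"
      "\<And>n. real (Suc n) * norm (a n) < norm (b n)"
    by metis
  have "(\<lambda>n. dist (u n, v n) (ub, yb)) \<longlonglongrightarrow> 0"
    using uv(2) by (intro Lim_null_comparison[OF always_eventually LIMSEQ_inverse_real_of_nat]) simp
  then have "(\<lambda>n. (u n, v n)) \<longlonglongrightarrow> (ub, yb)"
    by (rule tendsto_dist_iff[THEN iffD2])
  with uv(1) ab obtain l where "norm l = 1" "(0, l) \<in> normal_cone (gph S) (ub, yb)"
    using normal_cone_degenerate_limit[of "\<lambda>n. (u n, v n)" "gph S" "(ub, yb)" a b] by auto
  then have "0 \<in> coderiv S ub yb (- l)"
    by (simp add: coderiv_def)
  with kernel \<open>norm l = 1\<close> show False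
    by fastforce
qed

text \<open>For w = (x, v) this is |v - y| + |x - u| / M with the second term smoothed, so that the
  penalty is differentiable wherever v \<noteq> y and its minimisers obey the Fermat rule.\<close>

definition penalty :: "'a::real_inner \<Rightarrow> 'b::real_normed_vector \<Rightarrow> real \<Rightarrow> real \<Rightarrow> 'a \<times> 'b \<Rightarrow> real" where
  "penalty u y \<eta> M w = norm (snd w - y) + sqrt ((fst w - u) \<bullet> (fst w - u) + \<eta>\<^sup>2) / M"

lemma penalty_bounds:
  assumes "0 < M"
  shows "norm (snd w - y) \<le> penalty u y \<eta> M w" "norm (fst w - u) \<le> M * penalty u y \<eta> M w"
proof -
  have "norm (fst w - u) \<le> sqrt ((fst w - u) \<bullet> (fst w - u) + \<eta>\<^sup>2)"
    by (simp add: norm_eq_sqrt_inner)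
  moreover have "M * penalty u y \<eta> M w = M * norm (snd w - y) + sqrt ((fst w - u) \<bullet> (fst w - u) + \<eta>\<^sup>2)"
    using assms by (simp add: penalty_def distrib_left)
  moreover have "0 \<le> M * norm (snd w - y)"
    using assms by simp
  ultimately show "norm (fst w - u) \<le> M * penalty u y \<eta> M w"
    by linarith
  show "norm (snd w - y) \<le> penalty u y \<eta> M w"
    using assms by (simp add: penalty_def)
qed

lemma has_derivative_penalty:
  fixes u x :: "'a::euclidean_space" and y v :: "'b::euclidean_space"
  assumes "v \<noteq> y" "\<eta> > 0" "M \<noteq> 0"
  defines "\<rho> \<equiv> sqrt ((x - u) \<bullet> (x - u) + \<eta>\<^sup>2)"
  shows "(penalty u y \<eta> M has_derivative (\<lambda>h. ((inverse \<rho> / M) *\<^sub>R (x - u), sgn (v - y)) \<bullet> h)) (at (x, v))"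
proof -
  have "((\<lambda>w. snd w - y) has_derivative snd) (at (x, v))"
    by (auto intro!: derivative_eq_intros)
  from has_derivative_compose[OF this has_derivative_norm] assms(1)
  have norm: "((\<lambda>w. norm (snd w - y)) has_derivative (\<lambda>h. snd h \<bullet> sgn (v - y))) (at (x, v))"
    by simp
  have "0 < (x - u) \<bullet> (x - u) + \<eta>\<^sup>2"
    using assms(2) by (simp add: add_nonneg_pos)
  from DERIV_real_sqrt[OF this]
  have "DERIV sqrt ((fst (x, v) - u) \<bullet> (fst (x, v) - u) + \<eta>\<^sup>2) :> inverse \<rho> / 2"
    by (simp add: \<rho>_def)
  moreover have "((\<lambda>w. (fst w - u) \<bullet> (fst w - u) + \<eta>\<^sup>2) has_derivative (\<lambda>h. 2 * ((x - u) \<bullet> fst h))) (at (x, v))"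
    by (auto intro!: derivative_eq_intros simp: inner_commute)
  ultimately have "((\<lambda>w. sqrt ((fst w - u) \<bullet> (fst w - u) + \<eta>\<^sup>2))
      has_derivative (\<lambda>h. 2 * ((x - u) \<bullet> fst h) * (inverse \<rho> / 2))) (at (x, v))"
    by (rule DERIV_compose_FDERIV)
  from has_derivative_divide[OF this has_derivative_const assms(3)]
  have "((\<lambda>w. sqrt ((fst w - u) \<bullet> (fst w - u) + \<eta>\<^sup>2) / M)
      has_derivative (\<lambda>h. (x - u) \<bullet> fst h * inverse \<rho> / M)) (at (x, v))"
    by (rule has_derivative_eq_rhs) (simp add: fun_eq_iff)
  from has_derivative_add[OF norm this]
  show ?thesis
    unfolding penalty_def[abs_def]
    by (rule has_derivative_eq_rhs) (simp add: fun_eq_iff inner_Pair inner_commute)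
qed

lemma penalty_minimizer_on_target:
  fixes S :: "'a::euclidean_space \<Rightarrow> 'b::euclidean_space set"
  assumes bound: "regular_coderiv_bound S ub yb c \<delta>" and M: "c < M" "0 < M" and "0 < \<eta>"
    and xv: "v \<in> S x" "dist (x, v) (ub, yb) \<le> \<delta>"
    and min: "\<And>w. w \<in> gph S \<Longrightarrow> penalty u y \<eta> M (x, v) \<le> penalty u y \<eta> M w"
  shows "v = y"
proof (rule ccontr)
  assume "v \<noteq> y"
  define \<rho> where "\<rho> = sqrt ((x - u) \<bullet> (x - u) + \<eta>\<^sup>2)"
  define a where "a = (inverse \<rho> / M) *\<^sub>R (x - u)"
  have "(penalty u y \<eta> M has_derivative (\<lambda>h. (a, sgn (v - y)) \<bullet> h)) (at (x, v))"
    unfolding a_def \<rho>_def using has_derivative_penalty[OF \<open>v \<noteq> y\<close> \<open>0 < \<eta>\<close>, of M u x] M(2) by simp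
  from polar_tangent_cone_at_minimizer[OF this min]
  have "(- a, - sgn (v - y)) \<in> polar (tangent_cone (gph S) (x, v))"
    by simp
  with bound xv have "norm (- sgn (v - y)) \<le> c * norm (- a)"
    unfolding regular_coderiv_bound_def by blast
  moreover have "c * norm a < 1"
  proof -
    have "norm (x - u) < \<rho>"
      unfolding \<rho>_def norm_eq_sqrt_inner using \<open>0 < \<eta>\<close> by (intro real_sqrt_less_mono) simp
    moreover have "0 < \<rho>"
      using \<open>norm (x - u) < \<rho>\<close> by (meson le_less_trans norm_ge_zero)
    ultimately have "inverse \<rho> * norm (x - u) < 1"
      by (simp add: field_simps)
    have "norm a = inverse \<rho> * norm (x - u) / M"
      using \<open>0 < \<rho>\<close> M(2) by (simp add: a_def)
    also have "\<dots> < 1 / M"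
      using \<open>inverse \<rho> * norm (x - u) < 1\<close> M(2) by (rule divide_strict_right_mono)
    finally have "norm a < 1 / M" .
    show ?thesis
    proof (cases "c \<le> 0")
      case True
      then show ?thesis
        using mult_nonpos_nonneg[OF True norm_ge_zero[of a]] by linarith
    next
      case False
      then have "c * norm a < c * (1 / M)"
        using mult_strict_left_mono[OF \<open>norm a < 1 / M\<close>, of c] by simp
      also have "\<dots> < 1"
        using M by simp
      finally show ?thesis .
    qed
  qed
  ultimately show False
    using \<open>v \<noteq> y\<close> by (simp add: norm_sgn)
qed

text \<open>The budget keeps the sublevel set below the starting value inside the ball where the
  bound holds.\<close>

lemma regular_coderiv_bound_imp_preimage_point:
  fixes S :: "'a::euclidean_space \<Rightarrow> 'b::euclidean_space set"
  assumes closed: "closed (gph S)" and bound: "regular_coderiv_bound S ub yb c \<delta>"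
    and M: "c < M" "0 < M" and v: "v \<in> S u" and "0 < \<eta>"
    and budget: "dist u ub + dist y yb + (1 + M) * (dist v y + \<eta> / M) \<le> \<delta>"
  shows "\<exists>x. y \<in> S x \<and> dist x u \<le> M * dist v y + \<eta>"
proof -
  let ?F = "penalty u y \<eta> M"
  define F0 where "F0 = dist v y + \<eta> / M"
  have "?F (u, v) = F0"
    using \<open>0 < \<eta>\<close> M(2) by (simp add: penalty_def F0_def dist_norm)
  have sublevel: "dist (fst w) u \<le> M * F0 \<and> dist (snd w) y \<le> F0" if "?F w \<le> F0" for w
  proof -
    have "M * ?F w \<le> M * F0"
      using that M(2) by simp
    then show ?thesis
      using penalty_bounds[OF M(2), where w = w and y = y and \<eta> = \<eta> and u = u] that by (simp add: dist_norm)
  qed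
  then have "{w \<in> gph S. ?F w \<le> F0} \<subseteq> cball u (M * F0) \<times> cball y F0"
    by (force simp: dist_commute)
  then have "bounded {w \<in> gph S. ?F w \<le> ?F (u, v)}"
    unfolding \<open>?F (u, v) = F0\<close> by (rule bounded_subset[OF bounded_Times[OF bounded_cball bounded_cball]])
  moreover have "continuous_on UNIV ?F"
    unfolding penalty_def[abs_def] using M(2) by (intro continuous_intros) auto
  moreover have "(u, v) \<in> gph S"
    using v by simp
  ultimately obtain w where w: "w \<in> gph S" and min: "\<forall>w'\<in>gph S. ?F w \<le> ?F w'"
    using closed_attains_inf_bounded_sublevel[OF closed] by blast
  obtain x v' where xv': "w = (x, v')"
    by fastforce
  have "?F w \<le> F0"
    using min \<open>(u, v) \<in> gph S\<close> \<open>?F (u, v) = F0\<close> by fastforce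
  then have dx: "dist x u \<le> M * F0" and dv': "dist v' y \<le> F0"
    using sublevel xv' by auto
  have "dist (x, v') (ub, yb) \<le> dist x ub + dist v' yb"
    by (simp add: dist_Pair_Pair sqrt_sum_squares_le_sum)
  also have "\<dots> \<le> (dist x u + dist u ub) + (dist v' y + dist y yb)"
    by (intro add_mono dist_triangle)
  also have "\<dots> \<le> \<delta>"
  proof -
    have "(1 + M) * F0 = F0 + M * F0"
      by (simp add: distrib_right)
    then show ?thesis
      using dx dv' budget unfolding F0_def[symmetric] by linarith
  qed
  finally have near: "dist (x, v') (ub, yb) \<le> \<delta>" .
  have "v' = y"
    by (rule penalty_minimizer_on_target[OF bound M \<open>0 < \<eta>\<close> _ near]) (use w min xv' in auto)
  moreover have "M * F0 = M * dist v y + \<eta>"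
    using M(2) by (simp add: F0_def distrib_left)
  ultimately show ?thesis
    using w dx xv' by auto
qed

text \<open>If y is close to S u the penalty argument starts from (u, v), otherwise from (ub, yb).\<close>

lemma regular_coderiv_bound_local_estimate:
  fixes S :: "'a::euclidean_space \<Rightarrow> 'b::euclidean_space set"
  assumes closed: "closed (gph S)" and "yb \<in> S ub" and bound: "regular_coderiv_bound S ub yb c \<delta>"
    and M: "c < M" "0 < M" and \<tau>: "0 < \<tau>" "2 * \<tau> + (1 + M) * (2 * \<tau>) \<le> \<delta>"
    and du: "dist u ub \<le> \<tau>" and dy: "dist y yb \<le> \<tau>" and v: "v \<in> S u"
  shows "{x. y \<in> S x} \<noteq> {} \<and> infdist u {x. y \<in> S x} \<le> (1 + 2 * M) * dist v y"
proof (cases "dist v y \<le> \<tau>")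
  case True
  have "\<exists>x\<in>{x. y \<in> S x}. dist x u \<le> M * dist v y + \<eta>" if "0 < \<eta>" "\<eta> \<le> M * \<tau>" for \<eta>
  proof -
    have "\<eta> / M \<le> \<tau>"
      using that(2) M(2) by (simp add: divide_le_eq mult.commute)
    then have "(1 + M) * (dist v y + \<eta> / M) \<le> (1 + M) * (2 * \<tau>)"
      using True M(2) by (intro mult_left_mono) auto
    then show ?thesis
      using regular_coderiv_bound_imp_preimage_point[OF closed bound M v that(1)] du dy \<tau>(2) by fastforce
  qed
  moreover have "0 < M * \<tau>"
    using \<tau>(1) M(2) by simp
  ultimately have "{x. y \<in> S x} \<noteq> {} \<and> infdist u {x. y \<in> S x} \<le> M * dist v y"
    by (intro infdist_le_of_approx) auto
  moreover have "M * dist v y \<le> (1 + 2 * M) * dist v y"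
    using M(2) by (intro mult_right_mono) auto
  ultimately show ?thesis
    by auto
next
  case False
  have "(1 + M) * (dist yb y + M * \<tau> / M) \<le> (1 + M) * (2 * \<tau>)"
    using dy M(2) by (intro mult_left_mono) (auto simp: dist_commute)
  then have "dist ub ub + dist y yb + (1 + M) * (dist yb y + M * \<tau> / M) \<le> \<delta>"
    using dy \<tau> by simp
  with regular_coderiv_bound_imp_preimage_point[OF closed bound M \<open>yb \<in> S ub\<close>, of "M * \<tau>" y] \<tau>(1) M(2)
  obtain x where x: "y \<in> S x" "dist x ub \<le> M * dist yb y + M * \<tau>"
    by auto
  have "M * dist yb y \<le> M * \<tau>"
    using dy M(2) by (simp add: dist_commute)
  have "infdist u {x. y \<in> S x} \<le> dist u ub + dist x ub"
    using infdist_le[of x "{x. y \<in> S x}" u] dist_triangle2[of u x ub] x(1) by simp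
  also have "\<dots> \<le> (1 + 2 * M) * \<tau>"
    using du x(2) \<open>M * dist yb y \<le> M * \<tau>\<close> by (simp add: algebra_simps)
  also have "\<dots> \<le> (1 + 2 * M) * dist v y"
    using False M(2) by (intro mult_left_mono) auto
  finally show ?thesis
    using x(1) by auto
qed

lemma regular_coderiv_bound_imp_metric_regular:
  fixes S :: "'a::euclidean_space \<Rightarrow> 'b::euclidean_space set"
  assumes closed: "closed (gph S)" and "yb \<in> S ub"
    and bound: "regular_coderiv_bound S ub yb c \<delta>" and "0 < c" "0 < \<delta>"
  shows "metric_regular S ub yb"
proof -
  define M where "M = c + 1"
  define \<tau> where "\<tau> = \<delta> / (4 * (1 + M))"
  have M: "c < M" "0 < M"
    using \<open>0 < c\<close> by (simp_all add: M_def)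
  have "0 < 1 + M"
    using M(2) by simp
  then have "0 < \<tau>" "(1 + M) * (2 * \<tau>) = \<delta> / 2"
    using \<open>0 < \<delta>\<close> by (simp_all add: \<tau>_def field_simps)
  moreover have "\<tau> \<le> \<delta> / 4"
    unfolding \<tau>_def using M(2) \<open>0 < \<delta>\<close> by (intro divide_left_mono) auto
  ultimately have \<tau>: "0 < \<tau>" "2 * \<tau> + (1 + M) * (2 * \<tau>) \<le> \<delta>"
    by linarith+
  have "{x. y \<in> S x} \<noteq> {} \<and> infdist u {x. y \<in> S x} \<le> (1 + 2 * M) * infdist y (S u)"
    if uy: "(u, y) \<in> cball (ub, yb) \<tau>" and "S u \<noteq> {}" for u y
  proof -
    have "dist u ub \<le> \<tau>" "dist y yb \<le> \<tau>"
      using uy dist_fst_le[of "(ub, yb)" "(u, y)"] dist_snd_le[of "(ub, yb)" "(u, y)"]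
      by (auto simp: dist_commute)
    moreover obtain v where "v \<in> S u" and "infdist y (S u) = dist v y"
      using infdist_attains_inf[OF closed_gph_imp_closed_image[OF closed] \<open>S u \<noteq> {}\<close>]
      by (metis dist_commute)
    ultimately show ?thesis
      using regular_coderiv_bound_local_estimate[OF closed \<open>yb \<in> S ub\<close> bound M \<tau>] by simp
  qed
  with M \<tau>(1) show ?thesis
    unfolding metric_regular_def by (intro exI[of _ "1 + 2 * M"] exI[of _ \<tau>]) auto
qed

theorem metric_regular_iff_coderiv_kernel:
  fixes S :: "'a::euclidean_space \<Rightarrow> 'b::euclidean_space set"
  assumes "closed (gph S)" "yb \<in> S ub"
  shows "metric_regular S ub yb \<longleftrightarrow> (\<forall>z. 0 \<in> coderiv S ub yb z \<longrightarrow> z = 0)"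
proof
  assume "metric_regular S ub yb"
  then obtain c \<delta> where "0 < \<delta>" "regular_coderiv_bound S ub yb c \<delta>"
    using metric_regular_imp_regular_coderiv_bound[OF assms(1)] by blast
  then show "\<forall>z. 0 \<in> coderiv S ub yb z \<longrightarrow> z = 0"
    using regular_coderiv_bound_imp_coderiv_kernel by blast
next
  assume "\<forall>z. 0 \<in> coderiv S ub yb z \<longrightarrow> z = 0"
  then obtain c \<delta> where "0 < c" "0 < \<delta>" "regular_coderiv_bound S ub yb c \<delta>"
    using coderiv_kernel_imp_regular_coderiv_bound by blast
  then show "metric_regular S ub yb"
    using regular_coderiv_bound_imp_metric_regular[OF assms] by blast
qed

lemma C1_map_differentiable:
  assumes "C1_map \<Phi>"
  shows "\<Phi> differentiable at w"
  using assms unfolding C1_map_def differentiable_def by blast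

lemma C1_map_continuous:
  assumes "C1_map \<Phi>"
  shows "continuous_on UNIV \<Phi>"
  unfolding continuous_on_eq_continuous_at[OF open_UNIV]
  using differentiable_imp_continuous_within[OF C1_map_differentiable[OF assms]] by blast

lemma C1_map_tendsto_frechet_derivative:
  assumes "C1_map \<Phi>" and "w \<longlonglongrightarrow> w0"
  shows "(\<lambda>n. frechet_derivative \<Phi> (at (w n)) h) \<longlonglongrightarrow> frechet_derivative \<Phi> (at w0) h"
proof -
  obtain D where D: "\<And>w. (\<Phi> has_derivative blinfun_apply (D w)) (at w)" and "continuous_on UNIV D"
    using assms(1) unfolding C1_map_def by blast
  then have "(\<lambda>n. D (w n)) \<longlonglongrightarrow> D w0"
    using assms(2) by (auto intro: continuous_on_tendsto_compose)
  then have "(\<lambda>n. blinfun_apply (D (w n)) h) \<longlonglongrightarrow> blinfun_apply (D w0) h"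
    by (intro tendsto_intros)
  moreover have "frechet_derivative \<Phi> (at w) = blinfun_apply (D w)" for w
    using frechet_derivative_at[OF D] by simp
  ultimately show ?thesis
    by simp
qed

lemma adjoint_eq_sum_Basis:
  fixes f :: "'a::euclidean_space \<Rightarrow> 'b::euclidean_space"
  assumes "linear f"
  shows "adjoint f y = (\<Sum>b\<in>Basis. (f b \<bullet> y) *\<^sub>R b)"
proof -
  have "(\<Sum>b\<in>Basis. (f b \<bullet> y) *\<^sub>R b) = (\<Sum>b\<in>Basis. (adjoint f y \<bullet> b) *\<^sub>R b)"
    by (intro sum.cong refl) (metis adjoint_clauses(2)[OF assms] inner_commute)
  then show ?thesis
    by (simp add: euclidean_representation)
qed

lemma
  fixes \<Phi> :: "'a::euclidean_space \<times> 'b::euclidean_space \<Rightarrow> 'c::euclidean_space"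
  assumes "\<Phi> differentiable at (x, s)"
  shows linear_grad_x: "linear (grad_x \<Phi> x s)"
    and linear_grad_s: "linear (grad_s \<Phi> x s)"
    and grad_x_eq_sum: "grad_x \<Phi> x s z = (\<Sum>b\<in>Basis. (frechet_derivative \<Phi> (at (x, s)) (b, 0) \<bullet> z) *\<^sub>R b)"
    and grad_s_eq_sum: "grad_s \<Phi> x s z = (\<Sum>b\<in>Basis. (frechet_derivative \<Phi> (at (x, s)) (0, b) \<bullet> z) *\<^sub>R b)"
    and inner_frechet_derivative_eq_grad:
      "frechet_derivative \<Phi> (at (x, s)) (hx, hs) \<bullet> z = hx \<bullet> grad_x \<Phi> x s z + hs \<bullet> grad_s \<Phi> x s z"
proof -
  let ?D = "frechet_derivative \<Phi> (at (x, s))"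
  have D: "bounded_linear ?D"
    using assms frechet_derivative_works has_derivative_bounded_linear by blast
  have "bounded_linear (\<lambda>h. ?D (h, 0))" "bounded_linear (\<lambda>h. ?D (0, h))"
    by (auto intro!: bounded_linear_compose[OF D] bounded_linear_Pair bounded_linear_ident bounded_linear_zero)
  then have lx: "linear (\<lambda>h. ?D (h, 0))" and ls: "linear (\<lambda>h. ?D (0, h))"
    by (simp_all add: bounded_linear.linear)
  show "linear (grad_x \<Phi> x s)" "linear (grad_s \<Phi> x s)"
    unfolding grad_x_def grad_s_def using lx ls by (simp_all add: adjoint_linear)
  show "grad_x \<Phi> x s z = (\<Sum>b\<in>Basis. (?D (b, 0) \<bullet> z) *\<^sub>R b)"
    "grad_s \<Phi> x s z = (\<Sum>b\<in>Basis. (?D (0, b) \<bullet> z) *\<^sub>R b)"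
    unfolding grad_x_def grad_s_def by (simp_all add: adjoint_eq_sum_Basis[OF lx] adjoint_eq_sum_Basis[OF ls])
  have "?D (hx, hs) = ?D (hx, 0) + ?D (0, hs)"
    using linear_add[OF bounded_linear.linear[OF D], of "(hx, 0)" "(0, hs)"] by simp
  then show "?D (hx, hs) \<bullet> z = hx \<bullet> grad_x \<Phi> x s z + hs \<bullet> grad_s \<Phi> x s z"
    unfolding grad_x_def grad_s_def by (simp add: adjoint_works[OF lx] adjoint_works[OF ls] inner_add_left)
qed

lemma
  fixes \<Phi> :: "'a::euclidean_space \<times> 'b::euclidean_space \<Rightarrow> 'c::euclidean_space"
  assumes "C1_map \<Phi>" and "x \<longlonglongrightarrow> x0" "s \<longlonglongrightarrow> s0" "z \<longlonglongrightarrow> z0"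
  shows tendsto_grad_x: "(\<lambda>n. grad_x \<Phi> (x n) (s n) (z n)) \<longlonglongrightarrow> grad_x \<Phi> x0 s0 z0"
    and tendsto_grad_s: "(\<lambda>n. grad_s \<Phi> (x n) (s n) (z n)) \<longlonglongrightarrow> grad_s \<Phi> x0 s0 z0"
proof -
  have w: "(\<lambda>n. (x n, s n)) \<longlonglongrightarrow> (x0, s0)"
    using assms(2,3) by (rule tendsto_Pair)
  note sums = grad_x_eq_sum[OF C1_map_differentiable[OF assms(1)]] grad_s_eq_sum[OF C1_map_differentiable[OF assms(1)]]
  show "(\<lambda>n. grad_x \<Phi> (x n) (s n) (z n)) \<longlonglongrightarrow> grad_x \<Phi> x0 s0 z0"
    "(\<lambda>n. grad_s \<Phi> (x n) (s n) (z n)) \<longlonglongrightarrow> grad_s \<Phi> x0 s0 z0"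
    unfolding sums by (intro tendsto_intros C1_map_tendsto_frechet_derivative[OF assms(1) w] assms(4))+
qed

definition constraint_system ::
    "('a::real_vector \<times> 'b \<Rightarrow> 'c::real_vector) \<Rightarrow> 'a set \<Rightarrow> ('b \<Rightarrow> 'd::real_vector set) \<Rightarrow> 'a \<times> 'b \<Rightarrow> ('a \<times> 'c \<times> 'd) set" where
  "constraint_system \<Phi> \<Omega> T = (\<lambda>(x, s). (\<lambda>v. (- x, \<Phi> (x, s), 0) + v) ` (\<Omega> \<times> {0} \<times> T s))"

lemma mem_constraint_system [simp]:
  "(w1, w2, w3) \<in> constraint_system \<Phi> \<Omega> T (x, s) \<longleftrightarrow> x + w1 \<in> \<Omega> \<and> w2 = \<Phi> (x, s) \<and> w3 \<in> T s"
proof -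
  have "(w1, w2, w3) \<in> (\<lambda>v. (- x, \<Phi> (x, s), 0) + v) ` (\<Omega> \<times> {0} \<times> T s)
      \<longleftrightarrow> x + w1 \<in> \<Omega> \<and> w2 = \<Phi> (x, s) \<and> w3 \<in> T s"
  proof
    assume "x + w1 \<in> \<Omega> \<and> w2 = \<Phi> (x, s) \<and> w3 \<in> T s"
    then show "(w1, w2, w3) \<in> (\<lambda>v. (- x, \<Phi> (x, s), 0) + v) ` (\<Omega> \<times> {0} \<times> T s)"
      by (intro rev_image_eqI[of "(x + w1, 0, w3)"]) auto
  qed auto
  then show ?thesis
    by (simp add: constraint_system_def)
qed

lemma closed_gph_constraint_system:
  fixes \<Phi> :: "'a::real_normed_vector \<times> 'b::real_normed_vector \<Rightarrow> 'c::real_normed_vector"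
    and T :: "'b \<Rightarrow> 'd::real_normed_vector set"
  assumes "continuous_on UNIV \<Phi>" "closed \<Omega>" "closed (gph T)"
  shows "closed (gph (constraint_system \<Phi> \<Omega> T))"
proof -
  have "gph (constraint_system \<Phi> \<Omega> T) =
      (\<lambda>w. fst (fst w) + fst (snd w)) -` \<Omega> \<inter> {w. fst (snd (snd w)) = \<Phi> (fst w)} \<inter>
      (\<lambda>w. (snd (fst w), snd (snd (snd w)))) -` gph T"
    by (rule set_eqI) (clarsimp simp: split_paired_all)
  moreover have "continuous_on UNIV (\<lambda>w :: ('a \<times> 'b) \<times> 'a \<times> 'c \<times> 'd. fst (fst w) + fst (snd w))"
    "continuous_on UNIV (\<lambda>w :: ('a \<times> 'b) \<times> 'a \<times> 'c \<times> 'd. (snd (fst w), snd (snd (snd w))))"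
    "continuous_on UNIV (\<lambda>w :: ('a \<times> 'b) \<times> 'a \<times> 'c \<times> 'd. fst (snd (snd w)))"
    by (intro continuous_intros)+
  moreover have "continuous_on UNIV (\<lambda>w :: ('a \<times> 'b) \<times> 'a \<times> 'c \<times> 'd. \<Phi> (fst w))"
    by (rule continuous_on_compose2[OF assms(1)]) (auto intro: continuous_intros)
  ultimately show ?thesis
    using assms(2,3) by (simp add: closed_Int closed_vimage closed_Collect_eq)
qed

lemma gph_constraint_system_cases:
  assumes "w \<in> gph (constraint_system \<Phi> \<Omega> T)"
  obtains x s w1 w3 where "w = ((x, s), (w1, \<Phi> (x, s), w3))" "x + w1 \<in> \<Omega>" "w3 \<in> T s"
proof -
  obtain x s w1 w2 w3 where "w = ((x, s), (w1, w2, w3))"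
    by (metis prod.collapse)
  with assms that show ?thesis
    by simp
qed

lemma tangent_cone_graph_imp_derivative:
  assumes "(\<Phi> has_derivative \<Phi>') (at w)" and "(h, k) \<in> tangent_cone (range (\<lambda>w. (w, \<Phi> w))) (w, \<Phi> w)"
  shows "k = \<Phi>' h"
proof -
  obtain \<tau> vs where \<tau>: "\<forall>n. \<tau> n > 0" "\<tau> \<longlonglongrightarrow> 0" "vs \<longlonglongrightarrow> (h, k)"
    and on_graph: "\<forall>n. (w, \<Phi> w) + \<tau> n *\<^sub>R vs n \<in> range (\<lambda>w. (w, \<Phi> w))"
    using assms(2) unfolding tangent_cone_def by blast
  have "snd (vs n) = (\<Phi> (w + \<tau> n *\<^sub>R fst (vs n)) - \<Phi> w) /\<^sub>R \<tau> n" for n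
  proof -
    have "\<Phi> w + \<tau> n *\<^sub>R snd (vs n) = \<Phi> (w + \<tau> n *\<^sub>R fst (vs n))"
      using on_graph by (auto simp: prod_eq_iff)
    then have "\<Phi> (w + \<tau> n *\<^sub>R fst (vs n)) - \<Phi> w = \<tau> n *\<^sub>R snd (vs n)"
      by (simp add: algebra_simps)
    then show ?thesis
      using \<tau>(1)[rule_format, of n] by simp
  qed
  moreover have "(\<lambda>n. (\<Phi> (w + \<tau> n *\<^sub>R fst (vs n)) - \<Phi> w) /\<^sub>R \<tau> n) \<longlonglongrightarrow> \<Phi>' h"
    using tendsto_difference_quotient[OF assms(1)] \<tau>(1,2) tendsto_fst[OF \<tau>(3)] by simp
  ultimately have "(\<lambda>n. snd (vs n)) \<longlonglongrightarrow> \<Phi>' h"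
    by simp
  moreover have "(\<lambda>n. snd (vs n)) \<longlonglongrightarrow> k"
    using tendsto_snd[OF \<tau>(3)] by simp
  ultimately show ?thesis
    using LIMSEQ_unique by blast
qed

lemma tangent_cone_gph_constraint_system_components:
  fixes \<Phi> :: "'a::real_normed_vector \<times> 'b::real_normed_vector \<Rightarrow> 'c::real_normed_vector"
    and T :: "'b \<Rightarrow> 'd::real_normed_vector set"
  assumes \<Phi>: "(\<Phi> has_derivative \<Phi>') (at (x, s))"
    and t: "((hx, hs), (t1, t2, t3)) \<in> tangent_cone (gph (constraint_system \<Phi> \<Omega> T)) ((x, s), (w1, \<Phi> (x, s), w3))"
  shows "hx + t1 \<in> tangent_cone \<Omega> (x + w1)"
    and "t2 = \<Phi>' (hx, hs)"
    and "(hs, t3) \<in> tangent_cone (gph T) (s, w3)"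
proof -
  let ?Z = "gph (constraint_system \<Phi> \<Omega> T)"
  have "bounded_linear (\<lambda>v :: ('a \<times> 'b) \<times> 'a \<times> 'c \<times> 'd. fst (fst v) + fst (snd v))"
    "bounded_linear (\<lambda>v :: ('a \<times> 'b) \<times> 'a \<times> 'c \<times> 'd. (fst v, fst (snd (snd v))))"
    "bounded_linear (\<lambda>v :: ('a \<times> 'b) \<times> 'a \<times> 'c \<times> 'd. (snd (fst v), snd (snd (snd v))))"
    by (auto intro!: bounded_linear_add bounded_linear_Pair bounded_linear_fst_comp bounded_linear_snd_comp
        bounded_linear_fst bounded_linear_snd)
  note image = tangent_cone_linear_image[OF this(1) _ t, of 0] tangent_cone_linear_image[OF this(2) _ t, of 0]
    tangent_cone_linear_image[OF this(3) _ t, of 0]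
  show "hx + t1 \<in> tangent_cone \<Omega> (x + w1)"
    using image(1)[of \<Omega>] by (force simp: split_paired_all)
  show "(hs, t3) \<in> tangent_cone (gph T) (s, w3)"
    using image(3)[of "gph T"] by (force simp: split_paired_all)
  have "((hx, hs), t2) \<in> tangent_cone (range (\<lambda>w. (w, \<Phi> w))) ((x, s), \<Phi> (x, s))"
    using image(2)[of "range (\<lambda>w. (w, \<Phi> w))"] by (force simp: split_paired_all)
  then show "t2 = \<Phi>' (hx, hs)"
    by (rule tangent_cone_graph_imp_derivative[OF \<Phi>])
qed

lemma tangent_cone_gph_constraint_system_Omega:
  fixes \<Phi> :: "'a::real_normed_vector \<times> 'b::real_normed_vector \<Rightarrow> 'c::real_normed_vector"
    and T :: "'b \<Rightarrow> 'd::real_normed_vector set"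
  assumes "w3 \<in> T s" and "t \<in> tangent_cone \<Omega> (x + w1)"
  shows "((0, 0), (t, 0, 0)) \<in> tangent_cone (gph (constraint_system \<Phi> \<Omega> T)) ((x, s), (w1, \<Phi> (x, s), w3))"
proof -
  have "bounded_linear (\<lambda>t :: 'a. ((0 :: 'a, 0 :: 'b), (t, 0 :: 'c, 0 :: 'd)))"
    by (auto intro!: bounded_linear_Pair bounded_linear_ident bounded_linear_zero)
  from tangent_cone_linear_image[OF this _ assms(2), of "((x, s), (- x, \<Phi> (x, s), w3))"]
  show ?thesis
    using assms(1) by simp
qed

lemma tangent_cone_gph_constraint_system_T:
  fixes \<Phi> :: "'a::real_normed_vector \<times> 'b::real_normed_vector \<Rightarrow> 'c::real_normed_vector"
    and T :: "'b \<Rightarrow> 'd::real_normed_vector set"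
  assumes \<Phi>: "(\<Phi> has_derivative \<Phi>') (at (x, s))" and "x + w1 \<in> \<Omega>"
    and t: "(hs, t3) \<in> tangent_cone (gph T) (s, w3)"
  shows "((hx, hs), (- hx, \<Phi>' (hx, hs), t3)) \<in> tangent_cone (gph (constraint_system \<Phi> \<Omega> T)) ((x, s), (w1, \<Phi> (x, s), w3))"
proof -
  obtain \<tau> ws where \<tau>: "\<forall>n. \<tau> n > 0" "\<tau> \<longlonglongrightarrow> 0" "ws \<longlonglongrightarrow> (hs, t3)"
    and in_gph: "\<forall>n. (s, w3) + \<tau> n *\<^sub>R ws n \<in> gph T"
    using t unfolding tangent_cone_def by blast
  define q where "q n = (\<Phi> ((x, s) + \<tau> n *\<^sub>R (hx, fst (ws n))) - \<Phi> (x, s)) /\<^sub>R \<tau> n" for n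
  have "(\<lambda>n. (hx, fst (ws n))) \<longlonglongrightarrow> (hx, hs)"
    using tendsto_fst[OF \<tau>(3)] by (intro tendsto_intros) auto
  then have "q \<longlonglongrightarrow> \<Phi>' (hx, hs)"
    unfolding q_def using tendsto_difference_quotient[OF \<Phi>] \<tau>(1,2) by blast
  then have "(\<lambda>n. ((hx, fst (ws n)), (- hx, q n, snd (ws n)))) \<longlonglongrightarrow> ((hx, hs), (- hx, \<Phi>' (hx, hs), t3))"
    using tendsto_fst[OF \<tau>(3)] tendsto_snd[OF \<tau>(3)] by (intro tendsto_intros) auto
  moreover have "((x, s), (w1, \<Phi> (x, s), w3)) + \<tau> n *\<^sub>R ((hx, fst (ws n)), (- hx, q n, snd (ws n)))
      \<in> gph (constraint_system \<Phi> \<Omega> T)" for n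
  proof -
    have "\<Phi> (x, s) + \<tau> n *\<^sub>R q n = \<Phi> (x + \<tau> n *\<^sub>R hx, s + \<tau> n *\<^sub>R fst (ws n))"
      using \<tau>(1)[rule_format, of n] by (simp add: q_def)
    moreover have "w3 + \<tau> n *\<^sub>R snd (ws n) \<in> T (s + \<tau> n *\<^sub>R fst (ws n))"
      using in_gph[rule_format, of n] by (cases "ws n") simp
    ultimately show ?thesis
      using \<open>x + w1 \<in> \<Omega>\<close> by (simp add: algebra_simps)
  qed
  ultimately show ?thesis
    unfolding tangent_cone_def using \<tau>(1,2)
    by (intro CollectI exI[of _ \<tau>] exI[of _ "\<lambda>n. ((hx, fst (ws n)), (- hx, q n, snd (ws n)))"]) simp
qed

lemma inner_constraint_system_direction:
  fixes \<Phi> :: "'a::euclidean_space \<times> 'b::euclidean_space \<Rightarrow> 'c::euclidean_space"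
  assumes "\<Phi> differentiable at (x, s)"
  shows "((vx, vs), (y1, y2, y3)) \<bullet> ((hx, hs), (t1, frechet_derivative \<Phi> (at (x, s)) (hx, hs), t3))
    = (vx - y1 + grad_x \<Phi> x s y2) \<bullet> hx + y1 \<bullet> (hx + t1) + (vs + grad_s \<Phi> x s y2, y3) \<bullet> (hs, t3)"
proof -
  have "y2 \<bullet> frechet_derivative \<Phi> (at (x, s)) (hx, hs) = grad_x \<Phi> x s y2 \<bullet> hx + grad_s \<Phi> x s y2 \<bullet> hs"
    using inner_frechet_derivative_eq_grad[OF assms, of hx hs y2] by (simp add: inner_commute)
  then show ?thesis
    by (simp add: inner_Pair inner_add_left inner_diff_left inner_add_right)
qed

lemma polar_tangent_cone_gph_constraint_system_D:
  fixes \<Phi> :: "'a::euclidean_space \<times> 'b::euclidean_space \<Rightarrow> 'c::euclidean_space"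
    and T :: "'b \<Rightarrow> 'd::euclidean_space set"
  assumes \<Phi>: "\<Phi> differentiable at (x, s)" and "x + w1 \<in> \<Omega>" "w3 \<in> T s"
    and polar: "((vx, vs), (y1, y2, y3)) \<in> polar (tangent_cone (gph (constraint_system \<Phi> \<Omega> T)) ((x, s), (w1, \<Phi> (x, s), w3)))"
  shows "y1 \<in> polar (tangent_cone \<Omega> (x + w1))" "vx = y1 - grad_x \<Phi> x s y2"
    "(vs + grad_s \<Phi> x s y2, y3) \<in> polar (tangent_cone (gph T) (s, w3))"
proof -
  let ?v = "((vx, vs), (y1, y2, y3))"
  have le: "?v \<bullet> V \<le> 0" if "V \<in> tangent_cone (gph (constraint_system \<Phi> \<Omega> T)) ((x, s), (w1, \<Phi> (x, s), w3))" for V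
    using polar that by (simp add: polar_def)
  have "y1 \<bullet> t \<le> 0" if "t \<in> tangent_cone \<Omega> (x + w1)" for t
    using le[OF tangent_cone_gph_constraint_system_Omega[where T = T and s = s, OF \<open>w3 \<in> T s\<close> that]]
    by (simp add: inner_Pair)
  then show "y1 \<in> polar (tangent_cone \<Omega> (x + w1))"
    by (simp add: polar_def)
  define g where "g = vx - y1 + grad_x \<Phi> x s y2"
  have T: "g \<bullet> hx + (vs + grad_s \<Phi> x s y2, y3) \<bullet> (hs, t3) \<le> 0"
    if "(hs, t3) \<in> tangent_cone (gph T) (s, w3)" for hx hs t3
    using le[OF tangent_cone_gph_constraint_system_T[OF frechet_derivative_works[THEN iffD1, OF \<Phi>] \<open>x + w1 \<in> \<Omega>\<close> that, of hx]]
    unfolding inner_constraint_system_direction[OF \<Phi>] g_def by simp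
  have "(0, 0) \<in> tangent_cone (gph T) (s, w3)"
    using zero_in_tangent_cone[of "(s, w3)" "gph T"] \<open>w3 \<in> T s\<close> by (simp add: zero_prod_def)
  from T[OF this, of g] have "g = 0"
    by (metis add.right_neutral inner_gt_zero_iff inner_zero_right not_le inner_Pair)
  then show "vx = y1 - grad_x \<Phi> x s y2"
    unfolding g_def by (simp add: algebra_simps)
  have "(vs + grad_s \<Phi> x s y2, y3) \<bullet> t \<le> 0" if "t \<in> tangent_cone (gph T) (s, w3)" for t
    using T[of "fst t" "snd t" 0] that by simp
  then show "(vs + grad_s \<Phi> x s y2, y3) \<in> polar (tangent_cone (gph T) (s, w3))"
    by (simp add: polar_def)
qed

lemma polar_tangent_cone_gph_constraint_system_I:
  fixes \<Phi> :: "'a::euclidean_space \<times> 'b::euclidean_space \<Rightarrow> 'c::euclidean_space"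
    and T :: "'b \<Rightarrow> 'd::euclidean_space set"
  assumes \<Phi>: "\<Phi> differentiable at (x, s)" and "y1 \<in> polar (tangent_cone \<Omega> (x + w1))"
    and "(vs + grad_s \<Phi> x s y2, y3) \<in> polar (tangent_cone (gph T) (s, w3))"
  shows "((y1 - grad_x \<Phi> x s y2, vs), (y1, y2, y3))
    \<in> polar (tangent_cone (gph (constraint_system \<Phi> \<Omega> T)) ((x, s), (w1, \<Phi> (x, s), w3)))"
proof -
  have "((y1 - grad_x \<Phi> x s y2, vs), (y1, y2, y3)) \<bullet> ((hx, hs), (t1, t2, t3)) \<le> 0"
    if "((hx, hs), (t1, t2, t3)) \<in> tangent_cone (gph (constraint_system \<Phi> \<Omega> T)) ((x, s), (w1, \<Phi> (x, s), w3))"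
    for hx hs t1 t2 t3
  proof -
    note V = tangent_cone_gph_constraint_system_components[OF frechet_derivative_works[THEN iffD1, OF \<Phi>] that]
    have "y1 \<bullet> (hx + t1) \<le> 0" "(vs + grad_s \<Phi> x s y2, y3) \<bullet> (hs, t3) \<le> 0"
      using assms(2,3) V(1,3) by (auto simp: polar_def)
    then show ?thesis
      using inner_constraint_system_direction[OF \<Phi>, of "y1 - grad_x \<Phi> x s y2" vs y1 y2 y3 hx hs t1 t3] V(2)
      by simp
  qed
  then show ?thesis
    by (auto simp: polar_def)
qed

lemma normal_cone_gph_constraint_system_imp:
  fixes \<Phi> :: "'a::euclidean_space \<times> 'b::euclidean_space \<Rightarrow> 'c::euclidean_space"
    and T :: "'b \<Rightarrow> 'd::euclidean_space set"
  assumes \<Phi>: "C1_map \<Phi>"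
    and normal: "(0, (y1, y2, y3)) \<in> normal_cone (gph (constraint_system \<Phi> \<Omega> T)) ((x0, s0), (0, \<Phi> (x0, s0), t0))"
  shows "y1 = grad_x \<Phi> x0 s0 y2" "y1 \<in> normal_cone \<Omega> x0" "(grad_s \<Phi> x0 s0 y2, y3) \<in> normal_cone (gph T) (s0, t0)"
proof -
  obtain ws vs where ws: "\<forall>n. ws n \<in> gph (constraint_system \<Phi> \<Omega> T)" "ws \<longlonglongrightarrow> ((x0, s0), (0, \<Phi> (x0, s0), t0))"
    and vs: "vs \<longlonglongrightarrow> (0, (y1, y2, y3))" "\<forall>n. vs n \<in> polar (tangent_cone (gph (constraint_system \<Phi> \<Omega> T)) (ws n))"
    using normal unfolding normal_cone_def by blast
  have "\<exists>x s w1 w3. ws n = ((x, s), (w1, \<Phi> (x, s), w3)) \<and> x + w1 \<in> \<Omega> \<and> w3 \<in> T s" for n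
    using ws(1) by (meson gph_constraint_system_cases)
  then obtain x s w1 w3 where ws_eq: "\<And>n. ws n = ((x n, s n), (w1 n, \<Phi> (x n, s n), w3 n))"
    and in_\<Omega>: "\<And>n. x n + w1 n \<in> \<Omega>" and in_T: "\<And>n. w3 n \<in> T (s n)"
    by metis
  obtain vx vs' z1 z2 z3 where vs_eq: "\<And>n. vs n = ((vx n, vs' n), (z1 n, z2 n, z3 n))"
    by (intro that[of "\<lambda>n. fst (fst (vs n))" "\<lambda>n. snd (fst (vs n))" "\<lambda>n. fst (snd (vs n))"
          "\<lambda>n. fst (snd (snd (vs n)))" "\<lambda>n. snd (snd (snd (vs n)))"]) simp
  have ws_lim: "(\<lambda>n. ((x n, s n), (w1 n, \<Phi> (x n, s n), w3 n))) \<longlonglongrightarrow> ((x0, s0), (0, \<Phi> (x0, s0), t0))"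
    using ws(2) unfolding ws_eq[abs_def] .
  have x: "x \<longlonglongrightarrow> x0" and s: "s \<longlonglongrightarrow> s0" and w1: "w1 \<longlonglongrightarrow> 0" and w3: "w3 \<longlonglongrightarrow> t0"
    using tendsto_fst[OF tendsto_fst[OF ws_lim]] tendsto_snd[OF tendsto_fst[OF ws_lim]]
      tendsto_fst[OF tendsto_snd[OF ws_lim]] tendsto_snd[OF tendsto_snd[OF tendsto_snd[OF ws_lim]]]
    by simp_all
  have vs_lim: "(\<lambda>n. ((vx n, vs' n), (z1 n, z2 n, z3 n))) \<longlonglongrightarrow> ((0, 0), (y1, y2, y3))"
    using vs(1) unfolding vs_eq[abs_def] by (simp add: zero_prod_def)
  have vx: "vx \<longlonglongrightarrow> 0" and vs': "vs' \<longlonglongrightarrow> 0" and z1: "z1 \<longlonglongrightarrow> y1" and z2: "z2 \<longlonglongrightarrow> y2" and z3: "z3 \<longlonglongrightarrow> y3"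
    using tendsto_fst[OF tendsto_fst[OF vs_lim]] tendsto_snd[OF tendsto_fst[OF vs_lim]]
      tendsto_fst[OF tendsto_snd[OF vs_lim]] tendsto_fst[OF tendsto_snd[OF tendsto_snd[OF vs_lim]]]
      tendsto_snd[OF tendsto_snd[OF tendsto_snd[OF vs_lim]]]
    by simp_all
  have polar: "z1 n \<in> polar (tangent_cone \<Omega> (x n + w1 n))" "vx n = z1 n - grad_x \<Phi> (x n) (s n) (z2 n)"
    "(vs' n + grad_s \<Phi> (x n) (s n) (z2 n), z3 n) \<in> polar (tangent_cone (gph T) (s n, w3 n))" for n
    using polar_tangent_cone_gph_constraint_system_D[where T = T, OF C1_map_differentiable[OF \<Phi>] in_\<Omega>[of n] in_T[of n]]
      vs(2)[rule_format, of n]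
    unfolding ws_eq vs_eq by blast+
  have "(\<lambda>n. vx n + grad_x \<Phi> (x n) (s n) (z2 n)) \<longlonglongrightarrow> 0 + grad_x \<Phi> x0 s0 y2"
    by (intro tendsto_add vx tendsto_grad_x[OF \<Phi> x s z2])
  with z1 show "y1 = grad_x \<Phi> x0 s0 y2"
    using LIMSEQ_unique by (simp add: polar(2))
  have "(\<lambda>n. x n + w1 n) \<longlonglongrightarrow> x0 + 0"
    by (intro tendsto_add x w1)
  with in_\<Omega> z1 polar(1) show "y1 \<in> normal_cone \<Omega> x0"
    unfolding normal_cone_def by (intro CollectI exI[of _ "\<lambda>n. x n + w1 n"] exI[of _ z1]) auto
  have "(\<lambda>n. (s n, w3 n)) \<longlonglongrightarrow> (s0, t0)"
    by (intro tendsto_Pair s w3)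
  moreover have "(\<lambda>n. (vs' n + grad_s \<Phi> (x n) (s n) (z2 n), z3 n)) \<longlonglongrightarrow> (0 + grad_s \<Phi> x0 s0 y2, y3)"
    by (intro tendsto_Pair tendsto_add vs' tendsto_grad_s[OF \<Phi> x s z2] z3)
  ultimately show "(grad_s \<Phi> x0 s0 y2, y3) \<in> normal_cone (gph T) (s0, t0)"
    unfolding normal_cone_def using in_T polar(3)
    by (intro CollectI exI[of _ "\<lambda>n. (s n, w3 n)"] exI[of _ "\<lambda>n. (vs' n + grad_s \<Phi> (x n) (s n) (z2 n), z3 n)"]) auto
qed

lemma normal_cone_gph_constraint_system_intro:
  fixes \<Phi> :: "'a::euclidean_space \<times> 'b::euclidean_space \<Rightarrow> 'c::euclidean_space"
    and T :: "'b \<Rightarrow> 'd::euclidean_space set"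
  assumes \<Phi>: "C1_map \<Phi>" and "y1 = grad_x \<Phi> x0 s0 y2" "y1 \<in> normal_cone \<Omega> x0"
    and "(grad_s \<Phi> x0 s0 y2, y3) \<in> normal_cone (gph T) (s0, t0)"
  shows "(0, (y1, y2, y3)) \<in> normal_cone (gph (constraint_system \<Phi> \<Omega> T)) ((x0, s0), (0, \<Phi> (x0, s0), t0))"
proof -
  obtain a \<alpha> where a: "\<forall>n. a n \<in> \<Omega>" "a \<longlonglongrightarrow> x0" "\<alpha> \<longlonglongrightarrow> y1" "\<forall>n. \<alpha> n \<in> polar (tangent_cone \<Omega> (a n))"
    using assms(3) unfolding normal_cone_def by blast
  obtain p \<beta> where p: "\<forall>n. p n \<in> gph T" "p \<longlonglongrightarrow> (s0, t0)" "\<beta> \<longlonglongrightarrow> (grad_s \<Phi> x0 s0 y2, y3)"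
    "\<forall>n. \<beta> n \<in> polar (tangent_cone (gph T) (p n))"
    using assms(4) unfolding normal_cone_def by blast
  define \<sigma> where "\<sigma> n = fst (p n)" for n
  define \<theta> where "\<theta> n = snd (p n)" for n
  have \<sigma>: "\<sigma> \<longlonglongrightarrow> s0" and \<theta>: "\<theta> \<longlonglongrightarrow> t0"
    using tendsto_fst[OF p(2)] tendsto_snd[OF p(2)] by (simp_all add: \<sigma>_def[abs_def] \<theta>_def[abs_def])
  define ws where "ws n = ((x0, \<sigma> n), (a n - x0, \<Phi> (x0, \<sigma> n), \<theta> n))" for n
  define vs where "vs n = ((\<alpha> n - grad_x \<Phi> x0 (\<sigma> n) y2, fst (\<beta> n) - grad_s \<Phi> x0 (\<sigma> n) y2), (\<alpha> n, y2, snd (\<beta> n)))" for n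
  have in_gph: "\<theta> n \<in> T (\<sigma> n)" for n
    using p(1) mem_gph_iff[of "\<sigma> n" "\<theta> n" T] by (simp add: \<sigma>_def \<theta>_def)
  have "ws n \<in> gph (constraint_system \<Phi> \<Omega> T)" for n
    using a(1) in_gph by (simp add: ws_def)
  moreover have "vs n \<in> polar (tangent_cone (gph (constraint_system \<Phi> \<Omega> T)) (ws n))" for n
    unfolding ws_def vs_def
  proof (rule polar_tangent_cone_gph_constraint_system_I[OF C1_map_differentiable[OF \<Phi>]])
    show "\<alpha> n \<in> polar (tangent_cone \<Omega> (x0 + (a n - x0)))"
      using a(4) by simp
    show "(fst (\<beta> n) - grad_s \<Phi> x0 (\<sigma> n) y2 + grad_s \<Phi> x0 (\<sigma> n) y2, snd (\<beta> n))
        \<in> polar (tangent_cone (gph T) (\<sigma> n, \<theta> n))"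
      using p(4) by (simp add: \<sigma>_def \<theta>_def)
  qed
  moreover have "ws \<longlonglongrightarrow> ((x0, s0), (0, \<Phi> (x0, s0), t0))"
  proof -
    have "(\<lambda>n. \<Phi> (x0, \<sigma> n)) \<longlonglongrightarrow> \<Phi> (x0, s0)"
      using \<sigma> by (intro continuous_on_tendsto_compose[OF C1_map_continuous[OF \<Phi>]] tendsto_intros) auto
    moreover have "(\<lambda>n. a n - x0) \<longlonglongrightarrow> 0"
      using tendsto_diff[OF a(2) tendsto_const[of x0]] by simp
    ultimately show ?thesis
      unfolding ws_def[abs_def] by (intro tendsto_Pair tendsto_const \<sigma> \<theta>)
  qed
  moreover have "vs \<longlonglongrightarrow> (0, (y1, y2, y3))"
  proof -
    have "vs \<longlonglongrightarrow> ((y1 - grad_x \<Phi> x0 s0 y2, grad_s \<Phi> x0 s0 y2 - grad_s \<Phi> x0 s0 y2), (y1, y2, y3))"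
      unfolding vs_def[abs_def] using tendsto_fst[OF p(3)] tendsto_snd[OF p(3)]
      by (intro tendsto_intros a(3) tendsto_grad_x[OF \<Phi>] tendsto_grad_s[OF \<Phi>] \<sigma>) auto
    then show ?thesis
      using assms(2) by (simp add: zero_prod_def)
  qed
  ultimately show ?thesis
    unfolding normal_cone_def by blast
qed

lemma horizontal_normal_cone_gph_constraint_system_iff:
  fixes \<Phi> :: "'a::euclidean_space \<times> 'b::euclidean_space \<Rightarrow> 'c::euclidean_space"
    and T :: "'b \<Rightarrow> 'd::euclidean_space set"
  assumes "C1_map \<Phi>"
  shows "(0, (y1, y2, y3)) \<in> normal_cone (gph (constraint_system \<Phi> \<Omega> T)) ((x0, s0), (0, \<Phi> (x0, s0), t0)) \<longleftrightarrow>
    y1 = grad_x \<Phi> x0 s0 y2 \<and> y1 \<in> normal_cone \<Omega> x0 \<and> (grad_s \<Phi> x0 s0 y2, y3) \<in> normal_cone (gph T) (s0, t0)"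
proof
  assume "(0, (y1, y2, y3)) \<in> normal_cone (gph (constraint_system \<Phi> \<Omega> T)) ((x0, s0), (0, \<Phi> (x0, s0), t0))"
  from normal_cone_gph_constraint_system_imp[OF assms this]
  show "y1 = grad_x \<Phi> x0 s0 y2 \<and> y1 \<in> normal_cone \<Omega> x0 \<and> (grad_s \<Phi> x0 s0 y2, y3) \<in> normal_cone (gph T) (s0, t0)"
    by blast
next
  assume "y1 = grad_x \<Phi> x0 s0 y2 \<and> y1 \<in> normal_cone \<Omega> x0 \<and> (grad_s \<Phi> x0 s0 y2, y3) \<in> normal_cone (gph T) (s0, t0)"
  then show "(0, (y1, y2, y3)) \<in> normal_cone (gph (constraint_system \<Phi> \<Omega> T)) ((x0, s0), (0, \<Phi> (x0, s0), t0))"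
    using normal_cone_gph_constraint_system_intro[OF assms] by blast
qed

lemma zero_in_coderiv_constraint_system_iff:
  fixes \<Phi> :: "'a::euclidean_space \<times> 'b::euclidean_space \<Rightarrow> 'c::euclidean_space"
    and T :: "'b \<Rightarrow> 'd::euclidean_space set"
  assumes \<Phi>: "C1_map \<Phi>"
  shows "0 \<in> coderiv (constraint_system \<Phi> \<Omega> T) (x0, s0) (0, \<Phi> (x0, s0), t0) (y, z, \<nu>) \<longleftrightarrow>
    y = grad_x \<Phi> x0 s0 z \<and> - grad_x \<Phi> x0 s0 z \<in> normal_cone \<Omega> x0 \<and> - grad_s \<Phi> x0 s0 z \<in> coderiv T s0 t0 \<nu>"
proof -
  have lin: "linear (grad_x \<Phi> x0 s0)" "linear (grad_s \<Phi> x0 s0)"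
    using C1_map_differentiable[OF \<Phi>] by (simp_all add: linear_grad_x linear_grad_s)
  have "0 \<in> coderiv (constraint_system \<Phi> \<Omega> T) (x0, s0) (0, \<Phi> (x0, s0), t0) (y, z, \<nu>) \<longleftrightarrow>
      (0, (- y, - z, - \<nu>)) \<in> normal_cone (gph (constraint_system \<Phi> \<Omega> T)) ((x0, s0), (0, \<Phi> (x0, s0), t0))"
    by (simp add: coderiv_def)
  also have "\<dots> \<longleftrightarrow> - y = grad_x \<Phi> x0 s0 (- z) \<and> - y \<in> normal_cone \<Omega> x0 \<and>
      (grad_s \<Phi> x0 s0 (- z), - \<nu>) \<in> normal_cone (gph T) (s0, t0)"
    by (rule horizontal_normal_cone_gph_constraint_system_iff[OF \<Phi>])
  also have "\<dots> \<longleftrightarrow> y = grad_x \<Phi> x0 s0 z \<and> - grad_x \<Phi> x0 s0 z \<in> normal_cone \<Omega> x0 \<and>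
      - grad_s \<Phi> x0 s0 z \<in> coderiv T s0 t0 \<nu>"
    using linear_neg[OF lin(1)] linear_neg[OF lin(2)] by (auto simp: coderiv_def)
  finally show ?thesis .
qed

lemma metric_regular_constraint_system_iff:
  fixes \<Phi> :: "'a::euclidean_space \<times> 'b::euclidean_space \<Rightarrow> 'c::euclidean_space"
    and T :: "'b \<Rightarrow> 'd::euclidean_space set"
  assumes \<Phi>: "C1_map \<Phi>" and "closed \<Omega>" "closed (gph T)" "x0 \<in> \<Omega>" "t0 \<in> T s0"
  shows "metric_regular (constraint_system \<Phi> \<Omega> T) (x0, s0) (0, \<Phi> (x0, s0), t0) \<longleftrightarrow>
    (\<forall>z \<nu>. - grad_x \<Phi> x0 s0 z \<in> normal_cone \<Omega> x0 \<and> - grad_s \<Phi> x0 s0 z \<in> coderiv T s0 t0 \<nu> \<longrightarrow> z = 0 \<and> \<nu> = 0)"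
    (is "_ \<longleftrightarrow> ?qualification")
proof -
  note kernel = zero_in_coderiv_constraint_system_iff[OF \<Phi>]
  have "closed (gph (constraint_system \<Phi> \<Omega> T))"
    using closed_gph_constraint_system[OF C1_map_continuous[OF \<Phi>] assms(2,3)] .
  moreover have "(0, \<Phi> (x0, s0), t0) \<in> constraint_system \<Phi> \<Omega> T (x0, s0)"
    using assms(4,5) by simp
  ultimately have "metric_regular (constraint_system \<Phi> \<Omega> T) (x0, s0) (0, \<Phi> (x0, s0), t0) \<longleftrightarrow>
      (\<forall>Y. 0 \<in> coderiv (constraint_system \<Phi> \<Omega> T) (x0, s0) (0, \<Phi> (x0, s0), t0) Y \<longrightarrow> Y = 0)"
    by (rule metric_regular_iff_coderiv_kernel)
  also have "\<dots> \<longleftrightarrow> ?qualification"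
  proof
    assume K: "\<forall>Y. 0 \<in> coderiv (constraint_system \<Phi> \<Omega> T) (x0, s0) (0, \<Phi> (x0, s0), t0) Y \<longrightarrow> Y = 0"
    show ?qualification
    proof (intro allI impI)
      fix z \<nu>
      assume "- grad_x \<Phi> x0 s0 z \<in> normal_cone \<Omega> x0 \<and> - grad_s \<Phi> x0 s0 z \<in> coderiv T s0 t0 \<nu>"
      with K kernel have "(grad_x \<Phi> x0 s0 z, z, \<nu>) = 0"
        by blast
      then show "z = 0 \<and> \<nu> = 0"
        by (simp add: zero_prod_def)
    qed
  next
    assume ?qualification
    show "\<forall>Y. 0 \<in> coderiv (constraint_system \<Phi> \<Omega> T) (x0, s0) (0, \<Phi> (x0, s0), t0) Y \<longrightarrow> Y = 0"
    proof (intro allI impI)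
      fix Y assume Y: "0 \<in> coderiv (constraint_system \<Phi> \<Omega> T) (x0, s0) (0, \<Phi> (x0, s0), t0) Y"
      obtain y z \<nu> where Y_eq: "Y = (y, z, \<nu>)"
        by (metis prod.collapse)
      with Y have "y = grad_x \<Phi> x0 s0 z" "z = 0 \<and> \<nu> = 0"
        using \<open>?qualification\<close> kernel by blast+
      then show "Y = 0"
        using linear_0[OF linear_grad_x[OF C1_map_differentiable[OF \<Phi>]]] by (simp add: Y_eq zero_prod_def)
    qed
  qed
  finally show ?thesis .
qed

lemma joint_coderiv_kernel_iff:
  fixes A :: "'p::real_vector \<Rightarrow> 'a::real_vector" and B :: "'p \<Rightarrow> 'b::real_inner"
    and T :: "'b \<Rightarrow> 'd::real_inner set"
  assumes "A 0 = 0" "B 0 = 0" "0 \<in> N"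
  shows "(\<forall>z \<nu>. - A z \<in> N \<and> - B z \<in> coderiv T s t \<nu> \<longrightarrow> z = 0 \<and> \<nu> = 0) \<longleftrightarrow>
    (\<forall>\<nu>. 0 \<in> coderiv T s t \<nu> \<longrightarrow> \<nu> = 0) \<and> (\<forall>z. - A z \<in> N \<and> - B z \<in> coderiv_range T s t \<longrightarrow> z = 0)"
  (is "?joint \<longleftrightarrow> ?kernel \<and> ?range")
proof
  assume ?joint
  have "\<nu> = 0" if "0 \<in> coderiv T s t \<nu>" for \<nu>
    using \<open>?joint\<close>[rule_format, of 0 \<nu>] that assms by simp
  moreover have ?range
    using \<open>?joint\<close> unfolding coderiv_range_def by blast
  ultimately show "?kernel \<and> ?range"
    by blast
next
  assume "?kernel \<and> ?range"
  show ?joint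
  proof (intro allI impI)
    fix z \<nu> assume h: "- A z \<in> N \<and> - B z \<in> coderiv T s t \<nu>"
    then have "z = 0"
      using \<open>?kernel \<and> ?range\<close> unfolding coderiv_range_def by blast
    with h \<open>?kernel \<and> ?range\<close> assms(2) show "z = 0 \<and> \<nu> = 0"
      by simp
  qed
qed

theorem proposition5:
  fixes \<Phi> :: "(real^('k::finite)) \<times> (real^('l::finite)) \<Rightarrow> real^('p::finite)"
    and \<Omega> :: "(real^'k) set"
    and T :: "real^'l \<Rightarrow> (real^('q::finite)) set"
    and xb :: "real^'k" and sb :: "real^'l"
  assumes C1: "C1_map \<Phi>"
    and cl: "closed \<Omega>"
    and osc: "outer_semicontinuous T"
    and zero: "\<Phi> (xb, sb) = 0"
    and xbin: "xb \<in> \<Omega>"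
    and Tb: "0 \<in> T sb"
  defines "G \<equiv> (\<lambda>(x, s). (- x, \<Phi> (x, s), 0 :: real^'q))"
    and "P \<equiv> (\<lambda>(x, s). \<Omega> \<times> {0 :: real^'p} \<times> T s)"
  shows
    "(metric_regular (\<lambda>w. (\<lambda>v. G w + v) ` P w) (xb, sb) 0
       \<longleftrightarrow> (\<forall>z \<nu>. - grad_x \<Phi> xb sb z \<in> normal_cone \<Omega> xb
                    \<and> - grad_s \<Phi> xb sb z \<in> coderiv T sb 0 \<nu> \<longrightarrow> z = 0 \<and> \<nu> = 0))
   \<and> (metric_regular (\<lambda>w. (\<lambda>v. G w + v) ` P w) (xb, sb) 0
       \<longleftrightarrow> metric_regular T sb 0
           \<and> (\<forall>z. - grad_x \<Phi> xb sb z \<in> normal_cone \<Omega> xb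
                    \<and> - grad_s \<Phi> xb sb z \<in> coderiv_range T sb 0 \<longrightarrow> z = 0))"
proof -
  have F: "(\<lambda>w. (\<lambda>v. G w + v) ` P w) = constraint_system \<Phi> \<Omega> T"
    unfolding G_def P_def constraint_system_def by (simp add: case_prod_unfold)
  have closed_T: "closed (gph T)"
    using osc by (simp add: outer_semicontinuous_def)
  have origin: "(0, \<Phi> (xb, sb), 0) = 0"
    using zero by (simp add: zero_prod_def)
  have a_b: "metric_regular (constraint_system \<Phi> \<Omega> T) (xb, sb) 0 \<longleftrightarrow>
      (\<forall>z \<nu>. - grad_x \<Phi> xb sb z \<in> normal_cone \<Omega> xb \<and> - grad_s \<Phi> xb sb z \<in> coderiv T sb 0 \<nu> \<longrightarrow> z = 0 \<and> \<nu> = 0)"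
    using metric_regular_constraint_system_iff[OF C1 cl closed_T xbin Tb] unfolding origin .
  have "grad_x \<Phi> xb sb 0 = 0" "grad_s \<Phi> xb sb 0 = 0"
    using C1_map_differentiable[OF C1] by (simp_all add: linear_0 linear_grad_x linear_grad_s)
  from joint_coderiv_kernel_iff[where A = "grad_x \<Phi> xb sb" and B = "grad_s \<Phi> xb sb", OF this zero_in_normal_cone[OF xbin]] a_b
  show ?thesis
    unfolding F metric_regular_iff_coderiv_kernel[OF closed_T Tb] by blast
qed

end
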